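(* Let $u$ be a sufficiently regular function and $H=(H^{\alpha\beta})$ a sufficiently regular symmetric 2-tensor field on $\mathcal{K}_{[s_0,s_1]}$. Let $I$ be a multi-index with values in $\{0,1,2\}$, $J$ a multi-index with values in $\{1,2\}$, $p=|I|+|J|$, $k=|J|$. Then, with a constant $C$ determined by $I,J$, $$\big|[\partial^IL^J,\underline{H}(\partial\partial,\partial)]u\big|\le Ct^{-1}\sum_{p_1+p_2=p,\ p_1<p\atop k_1+k_2=k}|\partial u|_{p_1+1,k_1+1}|H|_{p_2,k_2}+Ct^{-1}|H|\,|\partial u|_{p,k},$$ where $[\partial^IL^J,\underline{H}(\partial\partial,\partial)]u:=\partial^IL^J\big(\underline{H}(\partial\partial,\partial)u\big)-\underline{H}(\partial\partial,\partial)\big(\partial^IL^Ju\big)$.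
   Context: Coordinates $(t,x)=(x^0,x^1,x^2)$, $r=|x|$, $s=\sqrt{t^2-r^2}$, $\partial_0=\partial_t$, summation over repeated indices. $\mathcal{K}_{[s_0,s_1]}=\{(t,x): t>r+1,\ s_0^2\le t^2-r^2\le s_1^2\}$. Boosts $L_a=x^a\partial_t+t\partial_a$; $\partial^I=\partial_{i_1}\cdots\partial_{i_m}$, $L^J=L_{j_1}\cdots L_{j_n}$. Semi-hyperboloidal frame $\underline{\partial}_0=\partial_t$, $\underline{\partial}_a=(x^a/t)\partial_t+\partial_a$; $\partial_\alpha=\underline{\Psi}_\alpha^\beta\underline{\partial}_\beta$ with $\underline{\Psi}_0^0=1$, $\underline{\Psi}_a^0=-x^a/t$, $\underline{\Psi}_0^b=0$, $\underline{\Psi}_a^b=\delta_a^b$; $\underline{H}^{\alpha\beta}:=H^{\alpha'\beta'}\underline{\Psi}_{\alpha'}^\alpha\underline{\Psi}_{\beta'}^\beta$. Define $\underline{H}(\partial\partial,\partial)w:=\sum_{(\alpha,\beta)\ne(0,0)}\underline{H}^{\alpha\beta}\underline{\partial}_\alpha\underline{\partial}_\beta w+H^{\alpha\beta}\partial_\alpha(\underline{\Psi}_\beta^{\beta'})\underline{\partial}_{\beta'}w$. For a function $w$: $|w|_{p,k}:=\max|Z^Kw|$ over all operators $Z^K$ that are compositions, in any order, of $i$ partial derivatives $\partial_\alpha$ and $j$ boosts $L_a$ with $i+j\le p$, $j\le k$; $|\partial w|_{p,k}:=\max_\alpha|\partial_\alpha w|_{p,k}$; $|H|_{p,k}:=\max_{\alpha,\beta}|H^{\alpha\beta}|_{p,k}$;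 $|H|:=\max_{\alpha,\beta}|H^{\alpha\beta}|$. *)

theory Defs
  imports "HOL-Analysis.Analysis"
begin

text \<open>Spacetime points (t, x1, x2) in R^{1+2}; scalar fields on them.\<close>
type_synonym pt = "real \<times> real \<times> real"
type_synonym fn = "pt \<Rightarrow> real"

definition crd :: "nat \<Rightarrow> pt \<Rightarrow> real" where
  "crd a q = (if a = 0 then fst q else if a = 1 then fst (snd q) else snd (snd q))"

definition ev :: "nat \<Rightarrow> pt" where
  "ev a = (if a = 0 then (1,0,0) else if a = 1 then (0,1,0) else if a = 2 then (0,0,1) else 0)"

definition dpart :: "nat \<Rightarrow> fn \<Rightarrow> fn" where
  "dpart a f = (\<lambda>q. deriv (\<lambda>h. f (q + h *\<^sub>R ev a)) 0)"

definition dparts :: "nat list \<Rightarrow> fn \<Rightarrow> fn" where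
  "dparts ds f = foldr dpart ds f"

definition boost :: "nat \<Rightarrow> fn \<Rightarrow> fn" where
  "boost a f = (\<lambda>q. crd a q * dpart 0 f q + crd 0 q * dpart a f q)"

definition boosts :: "nat list \<Rightarrow> fn \<Rightarrow> fn" where
  "boosts js f = foldr boost js f"

text \<open>C^\<infinity> regularity on U: all iterated partial derivatives are (Frechet) differentiable on U.\<close>
definition smooth_on :: "pt set \<Rightarrow> fn \<Rightarrow> bool" where
  "smooth_on U f \<longleftrightarrow> (\<forall>ds. set ds \<subseteq> {0,1,2} \<longrightarrow> dparts ds f differentiable_on U)"

definition Kset :: "real \<Rightarrow> real \<Rightarrow> pt set" where
  "Kset s0 s1 = {q. crd 0 q > sqrt (crd 1 q ^ 2 + crd 2 q ^ 2) + 1 \<and>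
      s0 ^ 2 \<le> crd 0 q ^ 2 - (crd 1 q ^ 2 + crd 2 q ^ 2) \<and>
      crd 0 q ^ 2 - (crd 1 q ^ 2 + crd 2 q ^ 2) \<le> s1 ^ 2}"

datatype zop = Dz nat | Lz nat

fun zapp :: "zop \<Rightarrow> fn \<Rightarrow> fn" where
  "zapp (Dz a) f = dpart a f"
| "zapp (Lz a) f = boost a f"

fun is_Lz :: "zop \<Rightarrow> bool" where
  "is_Lz (Dz a) = False"
| "is_Lz (Lz a) = True"

definition zapps :: "zop list \<Rightarrow> fn \<Rightarrow> fn" where
  "zapps zs f = foldr zapp zs f"

definition ZK :: "nat \<Rightarrow> nat \<Rightarrow> zop list set" where
  "ZK p k = {zs. set zs \<subseteq> {Dz 0, Dz 1, Dz 2, Lz 1, Lz 2} \<and> length zs \<le> p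
                 \<and> length (filter is_Lz zs) \<le> k}"

definition znorm :: "nat \<Rightarrow> nat \<Rightarrow> fn \<Rightarrow> pt \<Rightarrow> real" where
  "znorm p k w q = Max ((\<lambda>zs. \<bar>zapps zs w q\<bar>) ` ZK p k)"

definition dnorm :: "nat \<Rightarrow> nat \<Rightarrow> fn \<Rightarrow> pt \<Rightarrow> real" where
  "dnorm p k w q = Max ((\<lambda>a. znorm p k (dpart a w) q) ` {0,1,2})"

definition Hnorm :: "nat \<Rightarrow> nat \<Rightarrow> (nat \<Rightarrow> nat \<Rightarrow> fn) \<Rightarrow> pt \<Rightarrow> real" where
  "Hnorm p k H q = Max ((\<lambda>(a,b). znorm p k (H a b) q) ` ({0,1,2} \<times> {0,1,2}))"

definition Habs :: "(nat \<Rightarrow> nat \<Rightarrow> fn) \<Rightarrow> pt \<Rightarrow> real" where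
  "Habs H q = Max ((\<lambda>(a,b). \<bar>H a b q\<bar>) ` ({0,1,2} \<times> {0,1,2}))"

text \<open>Transition matrix \<Psi>_\<alpha>^\<beta> (\<partial>_\<alpha> = \<Psi>_\<alpha>^\<beta> underline\<partial>_\<beta>).\<close>
definition Psi :: "nat \<Rightarrow> nat \<Rightarrow> fn" where
  "Psi a b q = (if a = 0 then (if b = 0 then 1 else 0)
                else (if b = 0 then - crd a q / crd 0 q else if a = b then 1 else 0))"

definition ubpart :: "nat \<Rightarrow> fn \<Rightarrow> fn" where
  "ubpart a w = (if a = 0 then dpart 0 w
                 else (\<lambda>q. crd a q / crd 0 q * dpart 0 w q + dpart a w q))"

definition Hbar :: "(nat \<Rightarrow> nat \<Rightarrow> fn) \<Rightarrow> nat \<Rightarrow> nat \<Rightarrow> fn" where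
  "Hbar H a b q = (\<Sum>a'\<in>{0,1,2}. \<Sum>b'\<in>{0,1,2}. H a' b' q * Psi a' a q * Psi b' b q)"

definition Hop :: "(nat \<Rightarrow> nat \<Rightarrow> fn) \<Rightarrow> fn \<Rightarrow> fn" where
  "Hop H w q =
     (\<Sum>a\<in>{0,1,2}. \<Sum>b\<in>{0,1,2}.
        if (a, b) = (0, 0) then 0 else Hbar H a b q * ubpart a (ubpart b w) q)
   + (\<Sum>a\<in>{0,1,2}. \<Sum>b\<in>{0,1,2}. \<Sum>b'\<in>{0,1,2}.
        H a b q * dpart a (Psi b b') q * ubpart b' w q)"

end

theory Submission
  imports Defs
begin

text \<open>Write \<open>K\<close> for the string of vector fields \<open>\<partial>\<^sup>I L\<^sup>J\<close>, of length \<open>p\<close> with \<open>k\<close> boosts.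
  In the semi-hyperboloidal frame the spatial vectors are \<open>L\<^sub>a / t\<close>, and the excluded component
  \<open>(\<alpha>, \<beta>) = (0, 0)\<close> is the only one of the second-order part that contains none of them; the
  derivatives of the transition matrix \<open>\<Psi>\<close> are \<open>O(1/t)\<close> as well.  Hence \<open>Hop H w\<close> is a sum of
  terms \<open>c \<cdot> H\<^sup>a\<^sup>b \<cdot> Y \<partial>\<^sub>g w\<close> with \<open>Y\<close> the identity or a single boost and \<open>c = O(1/t)\<close>, and
  applying any \<open>Z\<close> to such a coefficient keeps it \<open>O(1/t)\<close>.

  Commuting one vector field \<open>Z\<close> with such a term, the product rule puts \<open>Z\<close> on \<open>c\<close>, on \<open>H\<close>, or on
  \<open>Y \<partial>\<^sub>g w\<close>; in the last case only the commutator \<open>[Z, Y \<partial>\<^sub>g]\<close> survives, and since \<open>[\<partial>, L]\<close> is a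
  partial derivative and \<open>[L\<^sub>b, L\<^sub>c] = (x\<^sup>b L\<^sub>c - x\<^sup>c L\<^sub>b) / t\<close>, it is an operator of the same order as
  \<open>Y \<partial>\<^sub>g\<close> with bounded coefficients.  By induction along \<open>K\<close>, \<open>[Z\<^sup>K, Hop H] u\<close> is a sum of terms
  \<open>c \<cdot> Z\<^sup>A H\<^sup>a\<^sup>b \<cdot> Z\<^sup>B \<partial>\<^sub>g u\<close> with \<open>c = O(1/t)\<close> and \<open>|A| \<le> p - p\<^sub>1\<close>, \<open>|B| \<le> p\<^sub>1 + 1\<close> for some
  \<open>p\<^sub>1 < p\<close> (similarly for the boosts), each of which is bounded by one summand of the right-hand
  side.\<close>

lemma has_real_derivative_along_line:
  assumes "(f has_derivative f') (at (p + h0 *\<^sub>R e))"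
  shows "((\<lambda>h. f (p + h *\<^sub>R e)) has_real_derivative f' e) (at h0)"
proof -
  have "((\<lambda>h. p + h *\<^sub>R e) has_derivative (\<lambda>h. h *\<^sub>R e)) (at h0)"
    by (auto intro!: derivative_eq_intros)
  from has_derivative_compose[OF this assms]
  have "((\<lambda>h. f (p + h *\<^sub>R e)) has_derivative (\<lambda>h. f' (h *\<^sub>R e))) (at h0)" .
  moreover have "(\<lambda>h. f' (h *\<^sub>R e)) = (\<lambda>h. f' e * h)"
    using has_derivative_linear[OF assms] by (simp add: linear_scale mult.commute)
  ultimately show ?thesis by (simp add: has_field_derivative_def)
qed

lemma dpart_eq_derivative:
  assumes "(f has_derivative f') (at q)"
  shows "dpart a f q = f' (ev a)"
  unfolding dpart_def
  by (rule DERIV_imp_deriv, rule has_real_derivative_along_line) (use assms in simp)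

lemma has_real_derivative_dpart_along_line:
  assumes "f differentiable (at (p + s *\<^sub>R ev a))"
  shows "((\<lambda>h. f (p + h *\<^sub>R ev a)) has_real_derivative dpart a f (p + s *\<^sub>R ev a)) (at s)"
proof -
  obtain f' where "(f has_derivative f') (at (p + s *\<^sub>R ev a))"
    using assms unfolding differentiable_def by blast
  then show ?thesis
    using has_real_derivative_along_line dpart_eq_derivative by metis
qed

lemma dpart_add:
  assumes "f differentiable (at q)" "g differentiable (at q)"
  shows "dpart a (\<lambda>x. f x + g x) q = dpart a f q + dpart a g q"
proof -
  obtain f' g' where f: "(f has_derivative f') (at q)" and g: "(g has_derivative g') (at q)"
    using assms unfolding differentiable_def by blast
  show ?thesis
    using dpart_eq_derivative[OF has_derivative_add[OF f g]] dpart_eq_derivative[OF f]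
      dpart_eq_derivative[OF g] by simp
qed

lemma dpart_diff:
  assumes "f differentiable (at q)" "g differentiable (at q)"
  shows "dpart a (\<lambda>x. f x - g x) q = dpart a f q - dpart a g q"
proof -
  obtain f' g' where f: "(f has_derivative f') (at q)" and g: "(g has_derivative g') (at q)"
    using assms unfolding differentiable_def by blast
  show ?thesis
    using dpart_eq_derivative[OF has_derivative_diff[OF f g]] dpart_eq_derivative[OF f]
      dpart_eq_derivative[OF g] by simp
qed

lemma dpart_mult:
  assumes "f differentiable (at q)" "g differentiable (at q)"
  shows "dpart a (\<lambda>x. f x * g x) q = f q * dpart a g q + dpart a f q * g q"
proof -
  obtain f' g' where f: "(f has_derivative f') (at q)" and g: "(g has_derivative g') (at q)"
    using assms unfolding differentiable_def by blast
  show ?thesis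
    using dpart_eq_derivative[OF has_derivative_mult[OF f g]] dpart_eq_derivative[OF f]
      dpart_eq_derivative[OF g] by simp
qed

lemma dpart_const [simp]: "dpart a (\<lambda>x. c) q = 0"
  using dpart_eq_derivative[of "\<lambda>x. c" "\<lambda>_. 0" q a] by simp

lemma has_derivative_crd: "(crd a has_derivative crd a) (at q)"
  by (cases "a = 0"; cases "a = 1") (auto simp: crd_def [abs_def] intro!: derivative_eq_intros)

lemma differentiable_crd: "crd a differentiable (at q)"
  using has_derivative_crd unfolding differentiable_def by blast

lemma dpart_crd: "a \<le> 2 \<Longrightarrow> b \<le> 2 \<Longrightarrow> dpart a (crd b) q = (if a = b then 1 else 0)"
  using dpart_eq_derivative[OF has_derivative_crd[of b q], of a] by (auto simp: crd_def ev_def)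

lemma dpart_cong_open:
  assumes "open V" "q \<in> V" "\<And>x. x \<in> V \<Longrightarrow> f x = g x"
  shows "dpart a f q = dpart a g q"
proof -
  have "open ((\<lambda>h::real. q + h *\<^sub>R ev a) -` V)"
    by (rule open_vimage[OF assms(1)]) (intro continuous_intros)
  then have "\<forall>\<^sub>F h in nhds 0. f (q + h *\<^sub>R ev a) = g (q + h *\<^sub>R ev a)"
    unfolding eventually_nhds using assms(2,3) by (intro exI[of _ "(\<lambda>h. q + h *\<^sub>R ev a) -` V"]) auto
  then show ?thesis unfolding dpart_def by (rule deriv_cong_ev) simp
qed

lemma norm_ev: "a \<le> 2 \<Longrightarrow> norm (ev a) = 1"
  by (auto simp: ev_def numeral_2_eq_2 le_Suc_eq norm_prod_def)

definition eq_on :: "pt set \<Rightarrow> fn \<Rightarrow> fn \<Rightarrow> bool" where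
  "eq_on V f g \<longleftrightarrow> (\<forall>q\<in>V. f q = g q)"

lemma eq_on_refl [simp]: "eq_on V f f"
  and eq_on_sym: "eq_on V f g \<Longrightarrow> eq_on V g f"
  and eq_on_trans: "eq_on V f g \<Longrightarrow> eq_on V g h \<Longrightarrow> eq_on V f h"
  by (auto simp: eq_on_def)

lemma eq_on_dpart: "open V \<Longrightarrow> eq_on V f g \<Longrightarrow> eq_on V (dpart a f) (dpart a g)"
  unfolding eq_on_def using dpart_cong_open by blast

lemma dparts_Nil [simp]: "dparts [] f = f"
  and dparts_Cons [simp]: "dparts (a # ds) f = dpart a (dparts ds f)"
  and dparts_snoc: "dparts (ds @ [a]) f = dparts ds (dpart a f)"
  by (simp_all add: dparts_def)

lemma eq_on_dparts: "open V \<Longrightarrow> eq_on V f g \<Longrightarrow> eq_on V (dparts ds f) (dparts ds g)"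
  by (induction ds) (auto intro: eq_on_dpart)

lemma differentiable_on_eq_on:
  assumes V: "open V" and f: "f differentiable_on V" and fg: "eq_on V f g"
  shows "g differentiable_on V"
  unfolding differentiable_on_eq_differentiable_at[OF V]
proof
  fix x assume x: "x \<in> V"
  then obtain f' where "(f has_derivative f') (at x)"
    using V f differentiable_on_eq_differentiable_at differentiable_def by blast
  then have "(g has_derivative f') (at x)"
    by (rule has_derivative_transform_within_open[OF _ V x]) (use fg in \<open>auto simp: eq_on_def\<close>)
  then show "g differentiable (at x)" unfolding differentiable_def by blast
qed

lemma smooth_on_iff:
  "smooth_on V f \<longleftrightarrow> f differentiable_on V \<and> (\<forall>a\<in>{0,1,2}. smooth_on V (dpart a f))"
proof
  assume f: "smooth_on V f"
  have "dparts (ds @ [a]) f differentiable_on V" if "a \<in> {0,1,2}" "set ds \<subseteq> {0,1,2}" for a ds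
    using f that unfolding smooth_on_def by simp
  then show "f differentiable_on V \<and> (\<forall>a\<in>{0,1,2}. smooth_on V (dpart a f))"
    using f unfolding smooth_on_def dparts_snoc by (metis dparts_Nil empty_subsetI empty_set)
next
  assume f: "f differentiable_on V \<and> (\<forall>a\<in>{0,1,2}. smooth_on V (dpart a f))"
  show "smooth_on V f"
    unfolding smooth_on_def
  proof (intro allI impI)
    fix ds :: "nat list" assume "set ds \<subseteq> {0,1,2}"
    then show "dparts ds f differentiable_on V"
      using f by (cases ds rule: rev_cases) (auto simp: dparts_snoc smooth_on_def)
  qed
qed

lemma smooth_on_coinduct:
  assumes V: "open V" and f: "f \<in> S"
    and S: "\<And>g. g \<in> S \<Longrightarrow> g differentiable_on V \<and> (\<forall>a\<in>{0,1,2}. \<exists>h\<in>S. eq_on V (dpart a g) h)"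
  shows "smooth_on V f"
proof -
  have "\<forall>g\<in>S. dparts ds g differentiable_on V" if "set ds \<subseteq> {0,1,2}" for ds
    using that
  proof (induction ds rule: rev_induct)
    case Nil
    then show ?case using S by simp
  next
    case (snoc a ds)
    show ?case
    proof
      fix g assume "g \<in> S"
      moreover have "a \<in> {0,1,2}" using snoc.prems by auto
      ultimately obtain h where h: "h \<in> S" "eq_on V (dpart a g) h"
        using S by blast
      then have "dparts ds h differentiable_on V" using snoc by auto
      moreover have "eq_on V (dparts ds h) (dparts ds (dpart a g))"
        using eq_on_dparts[OF V eq_on_sym[OF h(2)]] .
      ultimately show "dparts (ds @ [a]) g differentiable_on V"
        unfolding dparts_snoc using differentiable_on_eq_on[OF V] by blast
    qed
  qed
  then show ?thesis unfolding smooth_on_def using f by blast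
qed

lemma smooth_on_imp_differentiable_on: "smooth_on V f \<Longrightarrow> f differentiable_on V"
  using smooth_on_iff by blast

lemma smooth_on_imp_differentiable_at:
  "open V \<Longrightarrow> smooth_on V f \<Longrightarrow> q \<in> V \<Longrightarrow> f differentiable (at q)"
  using smooth_on_imp_differentiable_on differentiable_on_eq_differentiable_at by blast

lemma smooth_on_dpart:
  assumes "smooth_on V f" "a \<le> 2"
  shows "smooth_on V (dpart a f)"
proof -
  have "a \<in> {0,1,2}" using assms(2) by auto
  then show ?thesis using assms(1) smooth_on_iff by blast
qed

lemma smooth_on_eq_on:
  assumes V: "open V" and f: "smooth_on V f" and fg: "eq_on V f g"
  shows "smooth_on V g"
  unfolding smooth_on_def
proof (intro allI impI)
  fix ds :: "nat list" assume "set ds \<subseteq> {0,1,2}"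
  then have "dparts ds f differentiable_on V" using f unfolding smooth_on_def by blast
  then show "dparts ds g differentiable_on V"
    using differentiable_on_eq_on[OF V _ eq_on_dparts[OF V fg]] by blast
qed

lemma smooth_on_subset: "smooth_on V f \<Longrightarrow> W \<subseteq> V \<Longrightarrow> smooth_on W f"
  unfolding smooth_on_def by (meson differentiable_on_subset)

lemma differentiable_sum_list:
  "\<forall>x\<in>set xs. F x differentiable (at q) \<Longrightarrow> (\<lambda>q. \<Sum>x\<leftarrow>xs. F x q) differentiable (at q)"
proof (induction xs)
  case (Cons x xs)
  then have "(\<lambda>q. F x q + (\<Sum>x\<leftarrow>xs. F x q)) differentiable (at q)"
    by (intro differentiable_add) auto
  then show ?case by simp
qed simp

lemma dpart_sum_list:
  "\<forall>x\<in>set xs. F x differentiable (at q) \<Longrightarrow>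
    dpart a (\<lambda>q. \<Sum>x\<leftarrow>xs. F x q) q = (\<Sum>x\<leftarrow>xs. dpart a (F x) q)"
proof (induction xs)
  case (Cons x xs)
  then show ?case
    using dpart_add[of "F x" q "\<lambda>q. \<Sum>x\<leftarrow>xs. F x q" a] differentiable_sum_list[of xs F q] by simp
qed simp

definition dpart_products :: "nat \<Rightarrow> (fn \<times> fn) list \<Rightarrow> (fn \<times> fn) list" where
  "dpart_products a xs = concat (map (\<lambda>(f,g). [(f, dpart a g), (dpart a f, g)]) xs)"

lemma differentiable_sum_products:
  fixes xs :: "(fn \<times> fn) list"
  assumes "\<forall>(f,g)\<in>set xs. f differentiable (at q) \<and> g differentiable (at q)"
  shows "(\<lambda>q. \<Sum>(f,g)\<leftarrow>xs. f q * g q) differentiable (at q)"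
proof -
  have "(\<lambda>q. fst x q * snd x q) differentiable (at q)" if "x \<in> set xs" for x
  proof -
    have "fst x differentiable (at q)" "snd x differentiable (at q)"
      using assms that by (cases x, auto)+
    then show ?thesis by (rule differentiable_mult)
  qed
  then have "(\<lambda>q. \<Sum>x\<leftarrow>xs. fst x q * snd x q) differentiable (at q)"
    by (intro differentiable_sum_list) blast
  then show ?thesis by (simp add: case_prod_beta')
qed

lemma dpart_sum_products:
  fixes xs :: "(fn \<times> fn) list"
  assumes xs: "\<forall>(f,g)\<in>set xs. f differentiable (at q) \<and> g differentiable (at q)"
  shows "dpart a (\<lambda>q. \<Sum>(f,g)\<leftarrow>xs. f q * g q) q = (\<Sum>(f,g)\<leftarrow>dpart_products a xs. f q * g q)"
proof -
  have "dpart a (\<lambda>q. \<Sum>x\<leftarrow>xs. fst x q * snd x q) q = (\<Sum>x\<leftarrow>xs. dpart a (\<lambda>q. fst x q * snd x q) q)"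
    using xs by (intro dpart_sum_list) auto
  also have "\<dots> = (\<Sum>x\<leftarrow>xs. fst x q * dpart a (snd x) q + dpart a (fst x) q * snd x q)"
    using xs by (intro arg_cong[where f=sum_list] map_cong refl dpart_mult) auto
  also have "\<dots> = (\<Sum>(f,g)\<leftarrow>dpart_products a xs. f q * g q)"
    unfolding dpart_products_def by (induction xs) auto
  finally show ?thesis by (simp add: case_prod_beta')
qed

lemma smooth_on_sum_products:
  fixes xs :: "(fn \<times> fn) list"
  assumes V: "open V" and xs: "\<forall>(f,g)\<in>set xs. smooth_on V f \<and> smooth_on V g"
  shows "smooth_on V (\<lambda>q. \<Sum>(f,g)\<leftarrow>xs. f q * g q)"
proof -
  define S where "S = {h. \<exists>xs. (\<forall>(f,g)\<in>set xs. smooth_on V f \<and> smooth_on V g)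
    \<and> eq_on V h (\<lambda>q. \<Sum>(f,g)\<leftarrow>xs. f q * g q)}"
  show ?thesis
  proof (rule smooth_on_coinduct[OF V, of _ S])
    show "(\<lambda>q. \<Sum>(f,g)\<leftarrow>xs. f q * g q) \<in> S" unfolding S_def using xs by auto
  next
    fix h assume "h \<in> S"
    then obtain ys where ys: "\<forall>(f,g)\<in>set ys. smooth_on V f \<and> smooth_on V g"
      and h: "eq_on V h (\<lambda>q. \<Sum>(f,g)\<leftarrow>ys. f q * g q)" unfolding S_def by blast
    have diff: "\<forall>(f,g)\<in>set ys. f differentiable (at q) \<and> g differentiable (at q)" if "q \<in> V" for q
      using ys smooth_on_imp_differentiable_at[OF V _ that] by auto
    have "h differentiable_on V"
      using differentiable_on_eq_on[OF V _ eq_on_sym[OF h]] differentiable_sum_products[OF diff]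
      unfolding differentiable_on_eq_differentiable_at[OF V] by blast
    moreover have "dpart a h \<in> S" if a: "a \<in> {0,1,2}" for a
    proof -
      have "\<forall>(f,g)\<in>set (dpart_products a ys). smooth_on V f \<and> smooth_on V g"
        using ys a unfolding dpart_products_def by (auto intro!: smooth_on_dpart)
      moreover have "dpart a h q = (\<Sum>(f,g)\<leftarrow>dpart_products a ys. f q * g q)" if q: "q \<in> V" for q
        using dpart_cong_open[OF V q, of h _ a] h dpart_sum_products[OF diff[OF q]]
        unfolding eq_on_def by simp
      ultimately show ?thesis unfolding S_def eq_on_def by (intro CollectI exI[of _ "dpart_products a ys"]) simp
    qed
    ultimately show "h differentiable_on V \<and> (\<forall>a\<in>{0,1,2}. \<exists>k\<in>S. eq_on V (dpart a h) k)"
      by (meson eq_on_refl)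
  qed
qed

lemma smooth_on_const:
  assumes "open V"
  shows "smooth_on V (\<lambda>x. c)"
proof (rule smooth_on_coinduct[OF assms, of _ "range (\<lambda>c x. c)"])
  fix g :: fn assume "g \<in> range (\<lambda>c x. c)"
  moreover have "dpart a (\<lambda>x. c') = (\<lambda>x. 0)" for a c' by (simp add: fun_eq_iff)
  ultimately show "g differentiable_on V \<and> (\<forall>a\<in>{0,1,2}. \<exists>h\<in>range (\<lambda>c x. c). eq_on V (dpart a g) h)"
    by (auto intro!: exI[of _ 0])
qed simp

lemma smooth_on_crd:
  assumes "b \<le> 2" "open V"
  shows "smooth_on V (crd b)"
  unfolding smooth_on_iff[of V "crd b"]
proof (intro conjI ballI)
  show "crd b differentiable_on V"
    using differentiable_crd differentiable_at_imp_differentiable_on by blast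
  fix a :: nat assume "a \<in> {0,1,2}"
  then have "dpart a (crd b) = (\<lambda>x. if a = b then 1 else 0)"
    using assms(1) by (auto simp: fun_eq_iff dpart_crd)
  then show "smooth_on V (dpart a (crd b))" using smooth_on_const[OF assms(2)] by simp
qed

lemma smooth_on_mult: "open V \<Longrightarrow> smooth_on V f \<Longrightarrow> smooth_on V g \<Longrightarrow> smooth_on V (\<lambda>q. f q * g q)"
  using smooth_on_sum_products[of V "[(f,g)]"] by simp

lemma smooth_on_add: "open V \<Longrightarrow> smooth_on V f \<Longrightarrow> smooth_on V g \<Longrightarrow> smooth_on V (\<lambda>q. f q + g q)"
  using smooth_on_sum_products[of V "[(f,\<lambda>_. 1),(g,\<lambda>_. 1)]"] smooth_on_const[of V 1] by simp

lemma smooth_on_sum_list: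
  "open V \<Longrightarrow> \<forall>x\<in>set xs. smooth_on V (F x) \<Longrightarrow> smooth_on V (\<lambda>q. \<Sum>x\<leftarrow>xs. F x q)"
proof (induction xs)
  case Nil
  then show ?case using smooth_on_const[of V 0] by simp
next
  case (Cons x xs)
  then show ?case using smooth_on_add[of V "F x" "\<lambda>q. \<Sum>x\<leftarrow>xs. F x q"] by simp
qed

section \<open>Symmetry of second derivatives\<close>

lemma second_difference_mvt:
  fixes f :: fn
  assumes V: "open V" and f: "smooth_on V f" and a: "a \<le> 2" and h: "h > 0"
    and box: "\<And>s r. \<bar>s\<bar> \<le> h \<Longrightarrow> \<bar>r\<bar> \<le> h \<Longrightarrow> q + s *\<^sub>R ev a + r *\<^sub>R ev b \<in> V"
  shows "\<exists>s r. \<bar>s\<bar> \<le> h \<and> \<bar>r\<bar> \<le> h \<and>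
    f (q + h *\<^sub>R ev a + h *\<^sub>R ev b) - f (q + h *\<^sub>R ev a) - f (q + h *\<^sub>R ev b) + f q
     = h * h * dpart b (dpart a f) (q + s *\<^sub>R ev a + r *\<^sub>R ev b)"
proof -
  have df: "f differentiable (at x)" if "x \<in> V" for x
    using smooth_on_imp_differentiable_at[OF V f that] .
  have dfa: "dpart a f differentiable (at x)" if "x \<in> V" for x
    using smooth_on_imp_differentiable_at[OF V smooth_on_dpart[OF f a] that] .
  define g where "g s = f (q + h *\<^sub>R ev b + s *\<^sub>R ev a) - f (q + s *\<^sub>R ev a)" for s
  define g' where "g' s = dpart a f (q + h *\<^sub>R ev b + s *\<^sub>R ev a) - dpart a f (q + s *\<^sub>R ev a)" for s
  have "(g has_real_derivative g' s) (at s)" if "0 \<le> s" "s \<le> h" for s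
  proof -
    have "q + h *\<^sub>R ev b + s *\<^sub>R ev a \<in> V" using box[of s h] that h by (simp add: algebra_simps)
    moreover have "q + s *\<^sub>R ev a \<in> V" using box[of s 0] that h by simp
    ultimately show ?thesis unfolding g_def g'_def
      by (intro DERIV_diff has_real_derivative_dpart_along_line df)
  qed
  then obtain s where s: "0 < s" "s < h" and gs: "g h - g 0 = (h - 0) * g' s"
    using MVT2[OF h, of g g'] by auto
  define k where "k r = dpart a f (q + s *\<^sub>R ev a + r *\<^sub>R ev b)" for r
  define k' where "k' r = dpart b (dpart a f) (q + s *\<^sub>R ev a + r *\<^sub>R ev b)" for r
  have "(k has_real_derivative k' r) (at r)" if "0 \<le> r" "r \<le> h" for r
  proof -
    have "q + s *\<^sub>R ev a + r *\<^sub>R ev b \<in> V" using box[of s r] that s by simp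
    then show ?thesis unfolding k_def k'_def by (intro has_real_derivative_dpart_along_line dfa)
  qed
  then obtain r where r: "0 < r" "r < h" and kr: "k h - k 0 = (h - 0) * k' r"
    using MVT2[OF h, of k k'] by auto
  have "f (q + h *\<^sub>R ev a + h *\<^sub>R ev b) - f (q + h *\<^sub>R ev a) - f (q + h *\<^sub>R ev b) + f q = g h - g 0"
    unfolding g_def by (simp add: algebra_simps)
  also have "\<dots> = h * (k h - k 0)" using gs unfolding g'_def k_def by (simp add: algebra_simps)
  also have "\<dots> = h * h * k' r" using kr by simp
  finally show ?thesis unfolding k'_def using s r by (intro exI[of _ s] exI[of _ r]) auto
qed

lemma dist_shift_ev_le:
  assumes "x \<le> 2" "y \<le> 2"
  shows "dist (q + s *\<^sub>R ev x + r *\<^sub>R ev y) q \<le> \<bar>s\<bar> + \<bar>r\<bar>"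
proof -
  have "dist (q + s *\<^sub>R ev x + r *\<^sub>R ev y) q = norm (s *\<^sub>R ev x + r *\<^sub>R ev y)"
    by (simp add: dist_norm)
  also have "\<dots> \<le> norm (s *\<^sub>R ev x) + norm (r *\<^sub>R ev y)" by (rule norm_triangle_ineq)
  also have "\<dots> = \<bar>s\<bar> + \<bar>r\<bar>" using norm_ev[OF assms(1)] norm_ev[OF assms(2)] by simp
  finally show ?thesis .
qed

lemma mixed_dparts_agree_nearby:
  fixes f :: fn
  assumes V: "open V" and f: "smooth_on V f" and a: "a \<le> 2" and b: "b \<le> 2"
    and h: "h > 0" and ball: "ball q (3 * h) \<subseteq> V"
  shows "\<exists>x y. dist x q < 3 * h \<and> dist y q < 3 * h \<and> dpart b (dpart a f) x = dpart a (dpart b f) y"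
proof -
  have near: "dist (q + s *\<^sub>R ev x + r *\<^sub>R ev y) q < 3 * h"
    if "\<bar>s\<bar> \<le> h" "\<bar>r\<bar> \<le> h" "x \<le> 2" "y \<le> 2" for s r x y
    using dist_shift_ev_le[OF that(3,4), of q s r] that(1,2) h by linarith
  have box: "q + s *\<^sub>R ev x + r *\<^sub>R ev y \<in> V"
    if "\<bar>s\<bar> \<le> h" "\<bar>r\<bar> \<le> h" "x \<le> 2" "y \<le> 2" for s r x y
    using near[OF that] ball by (auto simp: dist_commute)
  obtain s1 r1 where sr1: "\<bar>s1\<bar> \<le> h" "\<bar>r1\<bar> \<le> h" and E1:
    "f (q + h *\<^sub>R ev a + h *\<^sub>R ev b) - f (q + h *\<^sub>R ev a) - f (q + h *\<^sub>R ev b) + f q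
     = h * h * dpart b (dpart a f) (q + s1 *\<^sub>R ev a + r1 *\<^sub>R ev b)"
    using second_difference_mvt[OF V f a h box[OF _ _ a b]] by blast
  obtain s2 r2 where sr2: "\<bar>s2\<bar> \<le> h" "\<bar>r2\<bar> \<le> h" and E2:
    "f (q + h *\<^sub>R ev b + h *\<^sub>R ev a) - f (q + h *\<^sub>R ev b) - f (q + h *\<^sub>R ev a) + f q
     = h * h * dpart a (dpart b f) (q + s2 *\<^sub>R ev b + r2 *\<^sub>R ev a)"
    using second_difference_mvt[OF V f b h box[OF _ _ b a]] by blast
  have "h * h * dpart b (dpart a f) (q + s1 *\<^sub>R ev a + r1 *\<^sub>R ev b)
      = h * h * dpart a (dpart b f) (q + s2 *\<^sub>R ev b + r2 *\<^sub>R ev a)"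
    using E1 E2 by (simp add: algebra_simps)
  then show ?thesis
    using h near[OF sr1 a b] near[OF sr2 b a] by (intro exI conjI) auto
qed

lemma dpart_dpart_commute:
  fixes f :: fn
  assumes V: "open V" and f: "smooth_on V f" and a: "a \<le> 2" and b: "b \<le> 2" and q: "q \<in> V"
  shows "dpart b (dpart a f) q = dpart a (dpart b f) q"
proof -
  define P Q where "P = dpart b (dpart a f)" and "Q = dpart a (dpart b f)"
  have "\<bar>P q - Q q\<bar> < 2 * e" if e: "e > 0" for e
  proof -
    have "continuous (at q) P"
      using smooth_on_imp_differentiable_at[OF V smooth_on_dpart[OF smooth_on_dpart[OF f a] b] q]
      unfolding P_def by (rule differentiable_imp_continuous_within)
    then obtain d1 where d1: "d1 > 0" "\<And>x. dist x q < d1 \<Longrightarrow> dist (P x) (P q) < e"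
      using e unfolding continuous_at_eps_delta by blast
    have "continuous (at q) Q"
      using smooth_on_imp_differentiable_at[OF V smooth_on_dpart[OF smooth_on_dpart[OF f b] a] q]
      unfolding Q_def by (rule differentiable_imp_continuous_within)
    then obtain d2 where d2: "d2 > 0" "\<And>x. dist x q < d2 \<Longrightarrow> dist (Q x) (Q q) < e"
      using e unfolding continuous_at_eps_delta by blast
    obtain d3 where d3: "d3 > 0" "ball q d3 \<subseteq> V" using V q open_contains_ball by blast
    define h where "h = min d1 (min d2 d3) / 3"
    have h: "h > 0" "3 * h \<le> d1" "3 * h \<le> d2" "3 * h \<le> d3"
      using d1 d2 d3 unfolding h_def by auto
    then have "ball q (3 * h) \<subseteq> V" using d3(2) by auto
    then obtain x y where "dist x q < 3 * h" "dist y q < 3 * h" "P x = Q y"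
      using mixed_dparts_agree_nearby[OF V f a b h(1)] unfolding P_def Q_def by blast
    then show ?thesis
      using d1(2)[of x] d2(2)[of y] h by (simp add: dist_real_def)
  qed
  from this[of "\<bar>P q - Q q\<bar> / 2"] have "P q = Q q" by (cases "P q = Q q") auto
  then show ?thesis unfolding P_def Q_def .
qed

section \<open>The vector fields \<open>Z\<close> and their commutators\<close>

definition Zfields :: "zop set" where
  "Zfields = {Dz 0, Dz 1, Dz 2, Lz 1, Lz 2}"

lemma ZfieldsE [consumes 1, case_names dpart boost]:
  assumes "Z \<in> Zfields"
  obtains (dpart) a where "Z = Dz a" "a \<le> 2" | (boost) b where "Z = Lz b" "b \<in> {1,2}"
  using assms unfolding Zfields_def by auto

lemma boost_add:
  assumes "f differentiable (at q)" "g differentiable (at q)"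
  shows "boost a (\<lambda>x. f x + g x) q = boost a f q + boost a g q"
  unfolding boost_def using dpart_add[OF assms] by (simp add: algebra_simps)

lemma boost_mult:
  assumes "f differentiable (at q)" "g differentiable (at q)"
  shows "boost a (\<lambda>x. f x * g x) q = f q * boost a g q + boost a f q * g q"
  unfolding boost_def using dpart_mult[OF assms] by (simp add: algebra_simps)

lemma boost_cong_open:
  assumes "open V" "q \<in> V" "\<And>x. x \<in> V \<Longrightarrow> f x = g x"
  shows "boost a f q = boost a g q"
  unfolding boost_def using dpart_cong_open[OF assms] by simp

lemma zapp_add:
  assumes "f differentiable (at q)" "g differentiable (at q)"
  shows "zapp Z (\<lambda>x. f x + g x) q = zapp Z f q + zapp Z g q"
  by (cases Z) (auto simp: dpart_add[OF assms] boost_add[OF assms])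

lemma zapp_diff:
  assumes "f differentiable (at q)" "g differentiable (at q)"
  shows "zapp Z (\<lambda>x. f x - g x) q = zapp Z f q - zapp Z g q"
  by (cases Z) (auto simp: dpart_diff[OF assms] boost_def algebra_simps)

lemma zapp_mult:
  assumes "f differentiable (at q)" "g differentiable (at q)"
  shows "zapp Z (\<lambda>x. f x * g x) q = f q * zapp Z g q + zapp Z f q * g q"
  by (cases Z) (auto simp: dpart_mult[OF assms] boost_mult[OF assms])

lemma zapp_mult3:
  assumes "f differentiable (at q)" "g differentiable (at q)" "h differentiable (at q)"
  shows "zapp Z (\<lambda>x. f x * g x * h x) q
    = zapp Z f q * g q * h q + f q * zapp Z g q * h q + f q * g q * zapp Z h q"
  using zapp_mult[of "\<lambda>x. f x * g x" q h Z] zapp_mult[OF assms(1,2), of Z] assms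
  by (simp add: algebra_simps)

lemma zapp_const [simp]: "zapp Z (\<lambda>x. c) q = 0"
  by (cases Z) (auto simp: boost_def)

lemma zapp_cong_open:
  assumes "open V" "q \<in> V" "\<And>x. x \<in> V \<Longrightarrow> f x = g x"
  shows "zapp Z f q = zapp Z g q"
  by (cases Z) (auto simp: dpart_cong_open[OF assms] boost_cong_open[OF assms])

lemma zapp_sum_list:
  "\<forall>x\<in>set xs. F x differentiable (at q) \<Longrightarrow>
    zapp Z (\<lambda>q. \<Sum>x\<leftarrow>xs. F x q) q = (\<Sum>x\<leftarrow>xs. zapp Z (F x) q)"
proof (induction xs)
  case (Cons x xs)
  then show ?case
    using zapp_add[of "F x" q "\<lambda>q. \<Sum>x\<leftarrow>xs. F x q" Z] differentiable_sum_list[of xs F q] by simp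
qed simp

lemma zapps_Nil [simp]: "zapps [] f = f"
  and zapps_Cons [simp]: "zapps (Z # zs) f = zapp Z (zapps zs f)"
  by (simp_all add: zapps_def)

lemma zapps_map_Dz_Lz: "zapps (map Dz I @ map Lz J) f = dparts I (boosts J f)"
proof -
  have "(\<lambda>b. zapp (Lz b)) = boost" by (simp add: fun_eq_iff)
  then show ?thesis
    by (induction I) (simp_all add: zapps_def boosts_def dparts_def foldr_map comp_def)
qed

lemma smooth_on_boost: "open V \<Longrightarrow> smooth_on V f \<Longrightarrow> a \<le> 2 \<Longrightarrow> smooth_on V (boost a f)"
  unfolding boost_def by (intro smooth_on_add smooth_on_mult smooth_on_crd smooth_on_dpart) auto

lemma smooth_on_zapp: "open V \<Longrightarrow> smooth_on V f \<Longrightarrow> Z \<in> Zfields \<Longrightarrow> smooth_on V (zapp Z f)"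
  by (erule ZfieldsE) (auto intro: smooth_on_dpart smooth_on_boost)

lemma smooth_on_zapps: "open V \<Longrightarrow> smooth_on V f \<Longrightarrow> set zs \<subseteq> Zfields \<Longrightarrow> smooth_on V (zapps zs f)"
  by (induction zs) (auto intro: smooth_on_zapp)

lemma dpart_boost_commute:
  assumes V: "open V" and f: "smooth_on V f" and q: "q \<in> V" and c: "c \<le> 2" and b: "b \<le> 2"
  shows "dpart c (boost b f) q = boost b (dpart c f) q
    + (if c = b then dpart 0 f q else 0) + (if c = 0 then dpart b f q else 0)"
proof -
  have d0: "dpart 0 f differentiable (at q)"
    using smooth_on_imp_differentiable_at[OF V smooth_on_dpart[OF f] q] by simp
  have db: "dpart b f differentiable (at q)"
    using smooth_on_imp_differentiable_at[OF V smooth_on_dpart[OF f b] q] .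
  have "dpart c (boost b f) q
      = crd b q * dpart c (dpart 0 f) q + dpart c (crd b) q * dpart 0 f q
        + (crd 0 q * dpart c (dpart b f) q + dpart c (crd 0) q * dpart b f q)"
    unfolding boost_def
    by (simp add: dpart_add dpart_mult differentiable_crd d0 db)
  also have "\<dots> = crd b q * dpart 0 (dpart c f) q + crd 0 q * dpart b (dpart c f) q
      + (if c = b then dpart 0 f q else 0) + (if c = 0 then dpart b f q else 0)"
    using dpart_dpart_commute[OF V f _ c q, of 0] dpart_dpart_commute[OF V f b c q]
      dpart_crd[OF c b] dpart_crd[OF c, of 0] by simp
  finally show ?thesis unfolding boost_def by simp
qed

lemma boost_commutator:
  assumes V: "open V" and f: "smooth_on V f" and q: "q \<in> V" and t: "crd 0 q \<noteq> 0"
    and b: "b \<in> {1,2}" and c: "c \<in> {1,2}"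
  shows "boost c (boost b f) q - boost b (boost c f) q
    = crd c q / crd 0 q * boost b f q - crd b q / crd 0 q * boost c f q"
proof -
  have b2: "b \<le> 2" and c2: "c \<le> 2" and b0: "b \<noteq> 0" and c0: "c \<noteq> 0" using b c by auto
  have "boost c (boost b f) q = crd c q * (boost b (dpart 0 f) q + dpart b f q)
        + crd 0 q * (boost b (dpart c f) q + (if c = b then dpart 0 f q else 0))"
    unfolding boost_def[of c "boost b f"]
    using dpart_boost_commute[OF V f q _ b2, of 0] dpart_boost_commute[OF V f q c2 b2] b0 c0 by simp
  moreover have "boost b (boost c f) q = crd b q * (boost c (dpart 0 f) q + dpart c f q)
        + crd 0 q * (boost c (dpart b f) q + (if b = c then dpart 0 f q else 0))"
    unfolding boost_def[of b "boost c f"]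
    using dpart_boost_commute[OF V f q _ c2, of 0] dpart_boost_commute[OF V f q b2 c2] b0 c0 by simp
  moreover have "dpart 0 (dpart b f) q = dpart b (dpart 0 f) q"
    "dpart 0 (dpart c f) q = dpart c (dpart 0 f) q" "dpart c (dpart b f) q = dpart b (dpart c f) q"
    using dpart_dpart_commute[OF V f _ _ q] b2 c2 by auto
  ultimately show ?thesis using t unfolding boost_def by (simp add: field_simps)
qed

section \<open>Coefficients\<close>

definition tpos :: "pt set" where
  "tpos = {q. crd 0 q > 0}"

lemma open_tpos: "open tpos"
proof -
  have "tpos = {q. 0 < fst q}" unfolding tpos_def crd_def by simp
  moreover have "open {q::pt. 0 < fst q}"
    by (rule open_Collect_less) (auto intro: continuous_intros)
  ultimately show ?thesis by simp
qed

definition future_cone :: "pt set" where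
  "future_cone = {q. 1 \<le> crd 0 q \<and> \<bar>crd 1 q\<bar> \<le> crd 0 q \<and> \<bar>crd 2 q\<bar> \<le> crd 0 q}"

lemma future_cone_subset_tpos: "future_cone \<subseteq> tpos"
  unfolding future_cone_def tpos_def by auto

lemma Kset_subset_future_cone: "Kset s0 s1 \<subseteq> future_cone"
proof
  fix q assume q: "q \<in> Kset s0 s1"
  define r where "r = sqrt (crd 1 q ^ 2 + crd 2 q ^ 2)"
  have t: "crd 0 q > r + 1" using q unfolding Kset_def r_def by auto
  have "\<bar>crd 1 q\<bar> \<le> r" "\<bar>crd 2 q\<bar> \<le> r" "0 \<le> r"
    unfolding r_def by (auto intro!: real_le_rsqrt)
  then show "q \<in> future_cone" unfolding future_cone_def using t by auto
qed

definition tinv :: fn where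
  "tinv q = 1 / crd 0 q"

text \<open>\<open>Coef0\<close> is generated by \<open>x\<^sup>a/t\<close> and \<open>1/t\<close>: its members are bounded on \<open>future_cone\<close>,
  boosts map it to itself, and partial derivatives map it into \<open>Coef1 = Coef0 / t\<close>.\<close>

inductive_set Coef0 :: "fn set" where
  Coef0_const: "(\<lambda>q. c) \<in> Coef0"
| Coef0_ratio: "b \<in> {1,2} \<Longrightarrow> (\<lambda>q. crd b q / crd 0 q) \<in> Coef0"
| Coef0_tinv: "tinv \<in> Coef0"
| Coef0_add: "f \<in> Coef0 \<Longrightarrow> g \<in> Coef0 \<Longrightarrow> (\<lambda>q. f q + g q) \<in> Coef0"
| Coef0_mult: "f \<in> Coef0 \<Longrightarrow> g \<in> Coef0 \<Longrightarrow> (\<lambda>q. f q * g q) \<in> Coef0"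
| Coef0_cong: "g \<in> Coef0 \<Longrightarrow> eq_on tpos f g \<Longrightarrow> f \<in> Coef0"

definition Coef1 :: "fn set" where
  "Coef1 = {f. \<exists>g\<in>Coef0. eq_on tpos f (\<lambda>q. tinv q * g q)}"

lemma has_derivative_tinv:
  "crd 0 q \<noteq> 0 \<Longrightarrow> (tinv has_derivative (\<lambda>h. - crd 0 h / (crd 0 q)\<^sup>2)) (at q)"
  unfolding tinv_def [abs_def]
  by (rule derivative_eq_intros has_derivative_crd refl | simp add: power2_eq_square field_simps)+

lemma has_derivative_ratio:
  "crd 0 q \<noteq> 0 \<Longrightarrow> ((\<lambda>q. crd b q / crd 0 q) has_derivative
    (\<lambda>h. (crd b h * crd 0 q - crd b q * crd 0 h) / (crd 0 q)\<^sup>2)) (at q)"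
  by (rule derivative_eq_intros has_derivative_crd refl | simp add: power2_eq_square field_simps)+

lemma dpart_tinv:
  "q \<in> tpos \<Longrightarrow> a \<le> 2 \<Longrightarrow> dpart a tinv q = tinv q * (if a = 0 then - tinv q else 0)"
  using dpart_eq_derivative[OF has_derivative_tinv[of q], of a] unfolding tpos_def tinv_def
  by (auto simp: crd_def ev_def numeral_2_eq_2 le_Suc_eq power2_eq_square)

lemma dpart_ratio:
  "q \<in> tpos \<Longrightarrow> a \<le> 2 \<Longrightarrow> b \<in> {1,2} \<Longrightarrow> dpart a (\<lambda>q. crd b q / crd 0 q) q
    = tinv q * ((if a = b then 1 else 0) - (if a = 0 then crd b q / crd 0 q else 0))"
  using dpart_eq_derivative[OF has_derivative_ratio[of q b], of a] unfolding tpos_def tinv_def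
  by (auto simp: crd_def ev_def numeral_2_eq_2 le_Suc_eq power2_eq_square field_simps)

lemma Coef0_differentiable: "f \<in> Coef0 \<Longrightarrow> q \<in> tpos \<Longrightarrow> f differentiable (at q)"
proof (induction f arbitrary: q rule: Coef0.induct)
  case (Coef0_ratio b)
  then show ?case using has_derivative_ratio[of q b] unfolding tpos_def differentiable_def by auto
next
  case Coef0_tinv
  then show ?case using has_derivative_tinv[of q] unfolding tpos_def differentiable_def by auto
next
  case (Coef0_cong g f)
  then obtain g' where "(g has_derivative g') (at q)" unfolding differentiable_def by blast
  then have "(f has_derivative g') (at q)"
    by (rule has_derivative_transform_within_open[OF _ open_tpos Coef0_cong.prems])
      (use Coef0_cong.hyps in \<open>auto simp: eq_on_def\<close>)
  then show ?case unfolding differentiable_def by blast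
qed (simp_all add: differentiable_add differentiable_mult)

lemma Coef0_bounded: "f \<in> Coef0 \<Longrightarrow> \<exists>M. \<forall>q\<in>future_cone. \<bar>f q\<bar> \<le> M"
proof (induction f rule: Coef0.induct)
  case (Coef0_const c)
  show ?case by (intro exI[of _ "\<bar>c\<bar>"]) simp
next
  case (Coef0_ratio b)
  have "\<bar>crd b q / crd 0 q\<bar> \<le> 1" if "q \<in> future_cone" for q
  proof -
    have x: "\<bar>crd b q\<bar> \<le> crd 0 q" and t: "crd 0 q > 0"
      using that Coef0_ratio unfolding future_cone_def by auto
    then have "\<bar>crd b q / crd 0 q\<bar> = \<bar>crd b q\<bar> / crd 0 q" by simp
    also have "\<dots> \<le> 1" using x t by simp
    finally show ?thesis .
  qed
  then show ?case by blast
next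
  case Coef0_tinv
  have "\<bar>tinv q\<bar> \<le> 1" if "q \<in> future_cone" for q
    using that unfolding future_cone_def tinv_def by simp
  then show ?case by blast
next
  case (Coef0_add f g)
  then obtain M N where "\<forall>q\<in>future_cone. \<bar>f q\<bar> \<le> M" "\<forall>q\<in>future_cone. \<bar>g q\<bar> \<le> N" by blast
  then have "\<bar>f q + g q\<bar> \<le> M + N" if "q \<in> future_cone" for q
    using abs_triangle_ineq[of "f q" "g q"] that by (meson add_mono order_trans)
  then show ?case by blast
next
  case (Coef0_mult f g)
  then obtain M N where M: "\<forall>q\<in>future_cone. \<bar>f q\<bar> \<le> M" and N: "\<forall>q\<in>future_cone. \<bar>g q\<bar> \<le> N" by blast
  have "\<bar>f q * g q\<bar> \<le> M * N" if "q \<in> future_cone" for q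
    unfolding abs_mult using M N that by (intro mult_mono') auto
  then show ?case by blast
next
  case (Coef0_cong g f)
  then obtain M where "\<forall>q\<in>future_cone. \<bar>g q\<bar> \<le> M" by blast
  moreover have "f q = g q" if "q \<in> future_cone" for q
    using Coef0_cong.hyps(2) that future_cone_subset_tpos unfolding eq_on_def by blast
  ultimately have "\<forall>q\<in>future_cone. \<bar>f q\<bar> \<le> M" by simp
  then show ?case by blast
qed

lemma Coef1I: "g \<in> Coef0 \<Longrightarrow> eq_on tpos f (\<lambda>q. tinv q * g q) \<Longrightarrow> f \<in> Coef1"
  unfolding Coef1_def by blast

lemma Coef1_tinv_mult: "g \<in> Coef0 \<Longrightarrow> (\<lambda>q. tinv q * g q) \<in> Coef1"
  by (erule Coef1I) simp

lemma Coef1_cong: "c \<in> Coef1 \<Longrightarrow> eq_on tpos f c \<Longrightarrow> f \<in> Coef1"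
  unfolding Coef1_def using eq_on_trans by blast

lemma Coef1_add: "c \<in> Coef1 \<Longrightarrow> d \<in> Coef1 \<Longrightarrow> (\<lambda>q. c q + d q) \<in> Coef1"
proof -
  assume "c \<in> Coef1" "d \<in> Coef1"
  then obtain g h where "g \<in> Coef0" "eq_on tpos c (\<lambda>q. tinv q * g q)"
    "h \<in> Coef0" "eq_on tpos d (\<lambda>q. tinv q * h q)" unfolding Coef1_def by blast
  then show ?thesis
    by (intro Coef1I[of "\<lambda>q. g q + h q"] Coef0_add) (auto simp: eq_on_def distrib_left)
qed

lemma Coef1_mult: "c \<in> Coef1 \<Longrightarrow> e \<in> Coef0 \<Longrightarrow> (\<lambda>q. c q * e q) \<in> Coef1"
proof -
  assume "c \<in> Coef1" "e \<in> Coef0"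
  then obtain g where "g \<in> Coef0" "eq_on tpos c (\<lambda>q. tinv q * g q)" unfolding Coef1_def by blast
  with \<open>e \<in> Coef0\<close> show ?thesis
    by (intro Coef1I[of "\<lambda>q. g q * e q"] Coef0_mult) (auto simp: eq_on_def)
qed

lemma Coef1_subset_Coef0: "Coef1 \<subseteq> Coef0"
  unfolding Coef1_def using Coef0.Coef0_cong Coef0_mult Coef0_tinv by blast

lemma dpart_Coef0: "f \<in> Coef0 \<Longrightarrow> a \<le> 2 \<Longrightarrow> dpart a f \<in> Coef1"
proof (induction f rule: Coef0.induct)
  case (Coef0_const c)
  show ?case by (rule Coef1I[OF Coef0.Coef0_const[of 0]]) (simp add: eq_on_def)
next
  case (Coef0_ratio b)
  let ?g = "\<lambda>q. (if a = b then 1 else 0) + (if a = 0 then -1 else 0) * (crd b q / crd 0 q)"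
  have "?g \<in> Coef0"
    using Coef0_ratio by (intro Coef0.Coef0_add Coef0.Coef0_mult Coef0.Coef0_const Coef0.Coef0_ratio)
  moreover have "eq_on tpos (dpart a (\<lambda>q. crd b q / crd 0 q)) (\<lambda>q. tinv q * ?g q)"
    using Coef0_ratio by (auto simp: eq_on_def dpart_ratio)
  ultimately show ?case by (rule Coef1I)
next
  case Coef0_tinv
  let ?g = "\<lambda>q. (if a = 0 then -1 else 0) * tinv q"
  have "?g \<in> Coef0" by (intro Coef0.Coef0_mult Coef0.Coef0_const Coef0.Coef0_tinv)
  moreover have "eq_on tpos (dpart a tinv) (\<lambda>q. tinv q * ?g q)"
    using Coef0_tinv by (auto simp: eq_on_def dpart_tinv)
  ultimately show ?case by (rule Coef1I)
next
  case (Coef0_add f g)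
  have "eq_on tpos (dpart a (\<lambda>q. f q + g q)) (\<lambda>q. dpart a f q + dpart a g q)"
    using Coef0_add.hyps unfolding eq_on_def by (simp add: dpart_add Coef0_differentiable)
  moreover have "(\<lambda>q. dpart a f q + dpart a g q) \<in> Coef1"
    using Coef0_add by (intro Coef1_add) auto
  ultimately show ?case using Coef1_cong by blast
next
  case (Coef0_mult f g)
  have "eq_on tpos (dpart a (\<lambda>q. f q * g q)) (\<lambda>q. dpart a g q * f q + dpart a f q * g q)"
    using Coef0_mult.hyps unfolding eq_on_def by (simp add: dpart_mult Coef0_differentiable)
  moreover have "(\<lambda>q. dpart a g q * f q + dpart a f q * g q) \<in> Coef1"
    using Coef0_mult by (intro Coef1_add Coef1_mult) auto
  ultimately show ?case using Coef1_cong by blast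
next
  case (Coef0_cong g f)
  then show ?case using Coef1_cong eq_on_dpart[OF open_tpos] by blast
qed

lemma zapp_Coef0: "f \<in> Coef0 \<Longrightarrow> Z \<in> Zfields \<Longrightarrow> zapp Z f \<in> Coef0"
proof (erule ZfieldsE)
  fix a assume "f \<in> Coef0" "Z = Dz a" "a \<le> 2"
  then show "zapp Z f \<in> Coef0" using dpart_Coef0 Coef1_subset_Coef0 by auto
next
  fix b assume f: "f \<in> Coef0" and Z: "Z = Lz b" and b: "b \<in> {1,2}"
  obtain g0 gb where g: "g0 \<in> Coef0" "gb \<in> Coef0"
    and g0: "\<forall>q\<in>tpos. dpart 0 f q = tinv q * g0 q" and gb: "\<forall>q\<in>tpos. dpart b f q = tinv q * gb q"
    using dpart_Coef0[OF f, of 0] dpart_Coef0[OF f, of b] b unfolding Coef1_def eq_on_def by auto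
  have "boost b f q = crd b q / crd 0 q * g0 q + gb q" if "q \<in> tpos" for q
    using g0[rule_format, OF that] gb[rule_format, OF that] that
    unfolding boost_def tinv_def tpos_def by (simp add: field_simps)
  moreover have "(\<lambda>q. crd b q / crd 0 q * g0 q + gb q) \<in> Coef0"
    using b g by (intro Coef0_add Coef0_mult Coef0_ratio)
  ultimately show "zapp Z f \<in> Coef0" unfolding Z using Coef0.Coef0_cong eq_on_def by auto
qed

lemma smooth_on_Coef0:
  assumes f: "f \<in> Coef0" and V: "open V" "V \<subseteq> tpos"
  shows "smooth_on V f"
proof -
  have "smooth_on tpos f"
  proof (rule smooth_on_coinduct[OF open_tpos f])
    fix g assume g: "g \<in> Coef0"
    have "g differentiable_on tpos"
      using Coef0_differentiable[OF g] differentiable_on_eq_differentiable_at[OF open_tpos] by blast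
    moreover have "dpart a g \<in> Coef0" if "a \<in> {0,1,2}" for a
      using zapp_Coef0[OF g, of "Dz a"] that unfolding Zfields_def by auto
    ultimately show "g differentiable_on tpos \<and> (\<forall>a\<in>{0,1,2}. \<exists>h\<in>Coef0. eq_on tpos (dpart a g) h)"
      by (meson eq_on_refl)
  qed
  then show ?thesis using smooth_on_subset V(2) by blast
qed

lemma zapp_tinv: "Z \<in> Zfields \<Longrightarrow> zapp Z tinv \<in> Coef1"
proof (erule ZfieldsE)
  fix a assume "Z = Dz a" "a \<le> 2"
  then show "zapp Z tinv \<in> Coef1" using dpart_Coef0[OF Coef0_tinv] by simp
next
  fix b assume Z: "Z = Lz b" and b: "b \<in> {1,2}"
  have "boost b tinv q = tinv q * (-1 * (crd b q / crd 0 q))" if "q \<in> tpos" for q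
  proof -
    have "dpart 0 tinv q = - tinv q * tinv q" "dpart b tinv q = 0"
      using dpart_tinv[OF that, of 0] dpart_tinv[OF that, of b] b by auto
    then show ?thesis unfolding boost_def by (simp add: tinv_def)
  qed
  moreover have "(\<lambda>q. -1 * (crd b q / crd 0 q)) \<in> Coef0"
    using b by (intro Coef0_mult Coef0_const Coef0_ratio)
  ultimately show "zapp Z tinv \<in> Coef1" unfolding Z using Coef1I eq_on_def by auto
qed

lemma zapp_Coef1:
  assumes c: "c \<in> Coef1" and Z: "Z \<in> Zfields"
  shows "zapp Z c \<in> Coef1"
proof -
  obtain g where g: "g \<in> Coef0" "eq_on tpos c (\<lambda>q. tinv q * g q)"
    using c unfolding Coef1_def by blast
  have "eq_on tpos (zapp Z c) (\<lambda>q. tinv q * zapp Z g q + zapp Z tinv q * g q)"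
  proof -
    have "zapp Z c q = zapp Z (\<lambda>q. tinv q * g q) q" if "q \<in> tpos" for q
      by (rule zapp_cong_open[OF open_tpos that]) (use g(2) in \<open>simp add: eq_on_def\<close>)
    moreover have "zapp Z (\<lambda>q. tinv q * g q) q = tinv q * zapp Z g q + zapp Z tinv q * g q"
      if "q \<in> tpos" for q
      by (rule zapp_mult[OF Coef0_differentiable[OF Coef0_tinv that] Coef0_differentiable[OF g(1) that]])
    ultimately show ?thesis unfolding eq_on_def by simp
  qed
  moreover have "(\<lambda>q. tinv q * zapp Z g q + zapp Z tinv q * g q) \<in> Coef1"
    using Coef1_tinv_mult[OF zapp_Coef0[OF g(1) Z]] Coef1_mult[OF zapp_tinv[OF Z] g(1)]
    by (rule Coef1_add)
  ultimately show ?thesis using Coef1_cong by blast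
qed

lemma Coef1_bound:
  assumes "c \<in> Coef1"
  shows "\<exists>M\<ge>0. \<forall>q\<in>future_cone. \<bar>c q\<bar> \<le> M / crd 0 q"
proof -
  obtain g where g: "g \<in> Coef0" "eq_on tpos c (\<lambda>q. tinv q * g q)"
    using assms unfolding Coef1_def by blast
  obtain M where M: "\<forall>q\<in>future_cone. \<bar>g q\<bar> \<le> M" using Coef0_bounded[OF g(1)] by blast
  have "\<bar>c q\<bar> \<le> max M 0 / crd 0 q" if q: "q \<in> future_cone" for q
  proof -
    have t: "crd 0 q > 0" using q unfolding future_cone_def by auto
    have "c q = g q / crd 0 q"
      using g(2) q future_cone_subset_tpos unfolding eq_on_def tinv_def by auto
    then have "\<bar>c q\<bar> = \<bar>g q\<bar> / crd 0 q" using t by simp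
    also have "\<dots> \<le> max M 0 / crd 0 q"
    proof (rule divide_right_mono)
      show "\<bar>g q\<bar> \<le> max M 0" using M q by fastforce
    qed (use t in simp)
    finally show ?thesis .
  qed
  then show ?thesis by (intro exI[of _ "max M 0"]) auto
qed

section \<open>Linear combinations of derivatives\<close>

definition boost_count :: "zop list \<Rightarrow> nat" where
  "boost_count zs = length (filter is_Lz zs)"

lemma boost_count_Nil [simp]: "boost_count [] = 0"
  and boost_count_Cons [simp]: "boost_count (Z # zs) = (if is_Lz Z then 1 else 0) + boost_count zs"
  by (auto simp: boost_count_def)

lemma ZK_iff: "zs \<in> ZK p k \<longleftrightarrow> set zs \<subseteq> Zfields \<and> length zs \<le> p \<and> boost_count zs \<le> k"
  unfolding ZK_def Zfields_def boost_count_def by auto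

lemma ZK_mono: "B \<in> ZK p k \<Longrightarrow> p \<le> p' \<Longrightarrow> k \<le> k' \<Longrightarrow> B \<in> ZK p' k'"
  unfolding ZK_iff by auto

lemma sum_list_concat_map: "(\<Sum>x\<leftarrow>concat (map g xs). f x) = (\<Sum>y\<leftarrow>xs. \<Sum>x\<leftarrow>g y. f x)"
  by (induction xs) auto

definition regular :: "pt set \<Rightarrow> fn \<Rightarrow> bool" where
  "regular V u \<longleftrightarrow> open V \<and> V \<subseteq> tpos \<and> smooth_on V u"

lemma regular_open: "regular V u \<Longrightarrow> open V"
  and regular_subset_tpos: "regular V u \<Longrightarrow> V \<subseteq> tpos"
  and regular_smooth: "regular V u \<Longrightarrow> smooth_on V u"
  unfolding regular_def by auto

lemma regular_zapps: "regular V u \<Longrightarrow> set K \<subseteq> Zfields \<Longrightarrow> regular V (zapps K u)"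
  unfolding regular_def using smooth_on_zapps by blast

text \<open>A term \<open>(e, B, d)\<close> stands for \<open>e \<cdot> Z\<^sup>B \<partial>\<^sub>d u\<close>.\<close>

type_synonym lin_term = "fn \<times> zop list \<times> nat"

definition lin_eval :: "fn \<Rightarrow> lin_term list \<Rightarrow> fn" where
  "lin_eval u ts q = (\<Sum>(e,B,d)\<leftarrow>ts. e q * zapps B (dpart d u) q)"

definition lin_terms :: "nat \<Rightarrow> nat \<Rightarrow> lin_term list \<Rightarrow> bool" where
  "lin_terms p k ts \<longleftrightarrow> (\<forall>(e,B,d)\<in>set ts. e \<in> Coef0 \<and> B \<in> ZK p k \<and> d \<le> 2)"

definition lin_rep :: "nat \<Rightarrow> nat \<Rightarrow> (fn \<Rightarrow> fn) \<Rightarrow> bool" where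
  "lin_rep p k F \<longleftrightarrow>
    (\<exists>ts. lin_terms p k ts \<and> (\<forall>V u. regular V u \<longrightarrow> eq_on V (F u) (lin_eval u ts)))"

lemma lin_repI:
  "lin_terms p k ts \<Longrightarrow> (\<And>V u. regular V u \<Longrightarrow> eq_on V (F u) (lin_eval u ts)) \<Longrightarrow> lin_rep p k F"
  unfolding lin_rep_def by blast

lemma lin_repE:
  assumes "lin_rep p k F"
  obtains ts where "lin_terms p k ts" "\<And>V u. regular V u \<Longrightarrow> eq_on V (F u) (lin_eval u ts)"
  using assms unfolding lin_rep_def by blast

lemma lin_terms_mono: "lin_terms p k ts \<Longrightarrow> p \<le> p' \<Longrightarrow> k \<le> k' \<Longrightarrow> lin_terms p' k' ts"
  unfolding lin_terms_def using ZK_mono by fast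

lemma lin_rep_mono: "lin_rep p k F \<Longrightarrow> p \<le> p' \<Longrightarrow> k \<le> k' \<Longrightarrow> lin_rep p' k' F"
  unfolding lin_rep_def using lin_terms_mono by blast

lemma lin_rep_cong:
  assumes "lin_rep p k F" "\<And>V u q. regular V u \<Longrightarrow> q \<in> V \<Longrightarrow> G u q = F u q"
  shows "lin_rep p k G"
proof -
  have "eq_on V (G u) (F u)" if "regular V u" for V u
    using assms(2)[OF that] unfolding eq_on_def by blast
  then show ?thesis using assms(1) unfolding lin_rep_def using eq_on_trans by blast
qed

lemma lin_rep_zero: "lin_rep p k (\<lambda>u q. 0)"
  by (rule lin_repI[of p k "[]"]) (auto simp: lin_terms_def lin_eval_def eq_on_def)

lemma lin_rep_if: "(P \<Longrightarrow> lin_rep p k F) \<Longrightarrow> lin_rep p k (\<lambda>u q. if P then F u q else 0)"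
  using lin_rep_zero by (cases P) auto

lemma lin_rep_add: "lin_rep p k F \<Longrightarrow> lin_rep p k G \<Longrightarrow> lin_rep p k (\<lambda>u q. F u q + G u q)"
proof -
  assume "lin_rep p k F" "lin_rep p k G"
  then obtain ts1 ts2
    where t1: "lin_terms p k ts1" "\<And>V u. regular V u \<Longrightarrow> eq_on V (F u) (lin_eval u ts1)"
      and t2: "lin_terms p k ts2" "\<And>V u. regular V u \<Longrightarrow> eq_on V (G u) (lin_eval u ts2)"
    by (meson lin_repE)
  show ?thesis
  proof (rule lin_repI[of p k "ts1 @ ts2"])
    show "lin_terms p k (ts1 @ ts2)" using t1(1) t2(1) unfolding lin_terms_def by auto
    fix V u assume "regular V u"
    then show "eq_on V (\<lambda>q. F u q + G u q) (lin_eval u (ts1 @ ts2))"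
      using t1(2) t2(2) unfolding eq_on_def lin_eval_def by auto
  qed
qed

definition scale_terms :: "fn \<Rightarrow> lin_term list \<Rightarrow> lin_term list" where
  "scale_terms e ts = map (\<lambda>(e',B,d). (\<lambda>q. e q * e' q, B, d)) ts"

lemma lin_eval_scale_terms: "lin_eval u (scale_terms e ts) q = e q * lin_eval u ts q"
  unfolding lin_eval_def scale_terms_def by (induction ts) (auto simp: algebra_simps)

lemma lin_rep_scale: "e \<in> Coef0 \<Longrightarrow> lin_rep p k F \<Longrightarrow> lin_rep p k (\<lambda>u q. e q * F u q)"
proof -
  assume e: "e \<in> Coef0" and "lin_rep p k F"
  then obtain ts where t: "lin_terms p k ts" "\<And>V u. regular V u \<Longrightarrow> eq_on V (F u) (lin_eval u ts)"
    by (meson lin_repE)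
  show ?thesis
  proof (rule lin_repI[of p k "scale_terms e ts"])
    show "lin_terms p k (scale_terms e ts)"
      using t(1) e unfolding lin_terms_def scale_terms_def by (auto intro: Coef0_mult)
    show "eq_on V (\<lambda>q. e q * F u q) (lin_eval u (scale_terms e ts))" if "regular V u" for V u
      using t(2)[OF that] unfolding eq_on_def lin_eval_scale_terms by auto
  qed
qed

lemma lin_rep_neg: "lin_rep p k F \<Longrightarrow> lin_rep p k (\<lambda>u q. - F u q)"
  using lin_rep_scale[OF Coef0_const[of "-1"], of p k F] by simp

lemma lin_rep_diff: "lin_rep p k F \<Longrightarrow> lin_rep p k G \<Longrightarrow> lin_rep p k (\<lambda>u q. F u q - G u q)"
  using lin_rep_add[of p k F "\<lambda>u q. - G u q"] lin_rep_neg[of p k G] by simp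

lemma lin_rep_atom: "B \<in> ZK p k \<Longrightarrow> d \<le> 2 \<Longrightarrow> lin_rep p k (\<lambda>u. zapps B (dpart d u))"
  by (rule lin_repI[of p k "[(\<lambda>q. 1, B, d)]"])
    (auto simp: lin_terms_def lin_eval_def eq_on_def intro: Coef0_const)

definition zapp_terms :: "zop \<Rightarrow> lin_term list \<Rightarrow> lin_term list" where
  "zapp_terms Z ts = concat (map (\<lambda>(e,B,d). [(e, Z # B, d), (zapp Z e, B, d)]) ts)"

lemma lin_terms_zapp_terms:
  assumes ts: "lin_terms p k ts" and Z: "Z \<in> Zfields"
  shows "lin_terms (Suc p) ((if is_Lz Z then 1 else 0) + k) (zapp_terms Z ts)"
  unfolding lin_terms_def
proof
  fix x assume "x \<in> set (zapp_terms Z ts)"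
  then obtain e B d where y: "(e,B,d) \<in> set ts"
    and x: "x = (e, Z # B, d) \<or> x = (zapp Z e, B, d)"
    unfolding zapp_terms_def by auto
  have "e \<in> Coef0" "set B \<subseteq> Zfields" "length B \<le> p" "boost_count B \<le> k" "d \<le> 2"
    using ts y unfolding lin_terms_def ZK_iff by auto
  then show "case x of (e, B, d) \<Rightarrow> e \<in> Coef0 \<and> B \<in> ZK (Suc p) ((if is_Lz Z then 1 else 0) + k) \<and> d \<le> 2"
    using x Z zapp_Coef0 unfolding ZK_iff by auto
qed

lemma zapp_lin_eval:
  assumes u: "regular V u" and ts: "lin_terms p k ts" and q: "q \<in> V"
  shows "zapp Z (lin_eval u ts) q = lin_eval u (zapp_terms Z ts) q"
proof -
  have V: "open V" using regular_open[OF u] .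
  let ?T = "\<lambda>(e,B,d) q. e q * zapps B (dpart d u) q"
  have qt: "q \<in> tpos" using q regular_subset_tpos[OF u] by blast
  have parts: "e differentiable (at q)" "zapps B (dpart d u) differentiable (at q)"
    if "(e,B,d) \<in> set ts" for e B d
  proof -
    have e: "e \<in> Coef0" and B: "set B \<subseteq> Zfields" and d: "d \<le> 2"
      using ts that unfolding lin_terms_def ZK_iff by auto
    show "e differentiable (at q)" using Coef0_differentiable[OF e qt] .
    show "zapps B (dpart d u) differentiable (at q)"
      using smooth_on_imp_differentiable_at[OF V smooth_on_zapps[OF V smooth_on_dpart[OF regular_smooth[OF u] d] B] q] .
  qed
  have "zapp Z (lin_eval u ts) q = zapp Z (\<lambda>q. \<Sum>x\<leftarrow>ts. ?T x q) q"
    unfolding lin_eval_def by (simp add: case_prod_beta')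
  also have "\<dots> = (\<Sum>x\<leftarrow>ts. zapp Z (?T x) q)"
    using parts by (intro zapp_sum_list) (auto simp: case_prod_beta')
  also have "\<dots> = (\<Sum>x\<leftarrow>ts. \<Sum>(e,B,d)\<leftarrow>(\<lambda>(e,B,d). [(e, Z # B, d), (zapp Z e, B, d)]) x.
      e q * zapps B (dpart d u) q)"
    using parts by (intro arg_cong[where f=sum_list] map_cong refl) (auto simp: zapp_mult)
  also have "\<dots> = lin_eval u (zapp_terms Z ts) q"
    unfolding lin_eval_def zapp_terms_def sum_list_concat_map ..
  finally show ?thesis .
qed

lemma lin_rep_zapp:
  assumes F: "lin_rep p k F" and Z: "Z \<in> Zfields"
  shows "lin_rep (Suc p) ((if is_Lz Z then 1 else 0) + k) (\<lambda>u. zapp Z (F u))"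
proof -
  obtain ts where ts: "lin_terms p k ts" "\<And>V u. regular V u \<Longrightarrow> eq_on V (F u) (lin_eval u ts)"
    using F by (meson lin_repE)
  show ?thesis
  proof (rule lin_repI[OF lin_terms_zapp_terms[OF ts(1) Z]])
    fix V u assume u: "regular V u"
    have "zapp Z (F u) q = zapp Z (lin_eval u ts) q" if "q \<in> V" for q
      by (rule zapp_cong_open[OF regular_open[OF u] that]) (use ts(2)[OF u] in \<open>simp add: eq_on_def\<close>)
    then show "eq_on V (zapp Z (F u)) (lin_eval u (zapp_terms Z ts))"
      using zapp_lin_eval[OF u ts(1)] unfolding eq_on_def by simp
  qed
qed

lemma lin_rep_dpart_zapps:
  "set K \<subseteq> Zfields \<Longrightarrow> g \<le> 2 \<Longrightarrow> lin_rep (length K) (boost_count K) (\<lambda>u. dpart g (zapps K u))"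
proof (induction K arbitrary: g)
  case Nil
  then show ?case using lin_rep_atom[of "[]" 0 0 g] by (simp add: ZK_iff)
next
  case (Cons Z K)
  have Z: "Z \<in> Zfields" and K: "set K \<subseteq> Zfields" using Cons.prems by auto
  have IH: "lin_rep (length (Z # K)) (boost_count (Z # K)) (\<lambda>u. zapp Z (dpart d (zapps K u)))"
    if "d \<le> 2" for d
    using lin_rep_zapp[OF Cons.IH[OF K that] Z] by simp
  have IH0: "lin_rep (length (Z # K)) (boost_count (Z # K)) (\<lambda>u. dpart d (zapps K u))"
    if "d \<le> 2" for d
    by (rule lin_rep_mono[OF Cons.IH[OF K that]]) auto
  have w: "smooth_on V (zapps K u)" if "regular V u" for V u
    using regular_smooth[OF regular_zapps[OF that K]] .
  show ?case
  proof (rule ZfieldsE[OF Z])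
    fix a assume Za: "Z = Dz a" "a \<le> 2"
    show ?thesis
      by (rule lin_rep_cong[OF IH[OF Cons.prems(2)]])
        (simp add: Za dpart_dpart_commute[OF regular_open w Za(2) Cons.prems(2)])
  next
    fix b assume Zb: "Z = Lz b" "b \<in> {1,2}"
    have b2: "b \<le> 2" using Zb(2) by auto
    have R: "lin_rep (length (Z # K)) (boost_count (Z # K)) (\<lambda>u q. zapp Z (dpart g (zapps K u)) q
       + (if g = b then dpart 0 (zapps K u) q else 0) + (if g = 0 then dpart b (zapps K u) q else 0))"
      using b2 by (intro lin_rep_add lin_rep_if IH IH0 Cons.prems(2)) auto
    show ?thesis
      by (rule lin_rep_cong[OF R])
        (simp add: Zb dpart_boost_commute[OF regular_open w _ Cons.prems(2) b2])
  qed
qed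

text \<open>The normal form of \<open>Hop\<close> applies to \<open>\<partial>\<^sub>g w\<close> either nothing or a single boost.\<close>

definition frame_op :: "zop list \<Rightarrow> bool" where
  "frame_op Y \<longleftrightarrow> Y = [] \<or> Y = [Lz 1] \<or> Y = [Lz 2]"

lemma frame_op_Zfields: "frame_op Y \<Longrightarrow> set Y \<subseteq> Zfields"
  unfolding frame_op_def Zfields_def by auto

lemma lin_rep_frame_op:
  assumes Y: "frame_op Y" and g: "g \<le> 2" and K: "set K \<subseteq> Zfields"
  shows "lin_rep (Suc (length K)) (Suc (boost_count K)) (\<lambda>u. zapps Y (dpart g (zapps K u)))"
proof (cases "Y = []")
  case True
  then show ?thesis using lin_rep_mono[OF lin_rep_dpart_zapps[OF K g]] by simp
next
  case False
  then obtain c where c: "c \<in> {1,2}" "Y = [Lz c]" using Y unfolding frame_op_def by auto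
  then have "Lz c \<in> Zfields" unfolding Zfields_def by auto
  from lin_rep_zapp[OF lin_rep_dpart_zapps[OF K g] this] show ?thesis using c by simp
qed

lemma dpart_boost_dpart_commutator:
  assumes V: "open V" and w: "smooth_on V w" and q: "q \<in> V"
    and a: "a \<le> 2" and c: "c \<le> 2" and g: "g \<le> 2"
  shows "dpart a (boost c (dpart g w)) q - boost c (dpart g (dpart a w)) q
    = (if a = c then dpart 0 (dpart g w) q else 0) + (if a = 0 then dpart c (dpart g w) q else 0)"
proof -
  have "boost c (dpart g (dpart a w)) q = boost c (dpart a (dpart g w)) q"
    by (rule boost_cong_open[OF V q]) (use dpart_dpart_commute[OF V w a g] in simp)
  then show ?thesis using dpart_boost_commute[OF V smooth_on_dpart[OF w g] q a c] by simp
qed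

lemma boost_boost_dpart_commutator:
  assumes V: "open V" and w: "smooth_on V w" and q: "q \<in> V" and t: "crd 0 q \<noteq> 0"
    and b: "b \<in> {1,2}" and c: "c \<in> {1,2}" and g: "g \<le> 2"
  shows "boost b (boost c (dpart g w)) q - boost c (dpart g (boost b w)) q
    = crd b q / crd 0 q * boost c (dpart g w) q - crd c q / crd 0 q * boost b (dpart g w) q
      - ((if g = b then boost c (dpart 0 w) q else 0) + (if g = 0 then boost c (dpart b w) q else 0))"
proof -
  have b2: "b \<le> 2" using b by auto
  have d1: "boost b (dpart g w) differentiable (at q)"
    using smooth_on_imp_differentiable_at[OF V smooth_on_boost[OF V smooth_on_dpart[OF w g] b2] q] .
  have d0: "dpart 0 w differentiable (at q)"
    using smooth_on_imp_differentiable_at[OF V smooth_on_dpart[OF w] q] by simp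
  have db: "dpart b w differentiable (at q)"
    using smooth_on_imp_differentiable_at[OF V smooth_on_dpart[OF w b2] q] .
  have "boost c (dpart g (boost b w)) q = boost c (\<lambda>x. boost b (dpart g w) x
      + (if g = b then dpart 0 w x else 0) + (if g = 0 then dpart b w x else 0)) q"
    by (rule boost_cong_open[OF V q]) (use dpart_boost_commute[OF V w _ g b2] in simp)
  also have "\<dots> = boost c (boost b (dpart g w)) q
      + (if g = b then boost c (dpart 0 w) q else 0) + (if g = 0 then boost c (dpart b w) q else 0)"
    using b d1 d0 db by (cases "g = b"; cases "g = 0") (auto simp: boost_add)
  finally show ?thesis
    using boost_commutator[OF V smooth_on_dpart[OF w g] q t c b] by simp
qed

lemma lin_rep_dpart_zapps_Suc:
  "set K \<subseteq> Zfields \<Longrightarrow> d \<le> 2 \<Longrightarrow>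
    lin_rep (Suc (length K)) (Suc (boost_count K)) (\<lambda>u. dpart d (zapps K u))"
  by (rule lin_rep_mono[OF lin_rep_dpart_zapps]) auto

lemma lin_rep_zapp_dpart_zapps:
  "set K \<subseteq> Zfields \<Longrightarrow> Z \<in> Zfields \<Longrightarrow> d \<le> 2 \<Longrightarrow>
    lin_rep (Suc (length K)) (Suc (boost_count K)) (\<lambda>u. zapp Z (dpart d (zapps K u)))"
  by (rule lin_rep_mono[OF lin_rep_zapp[OF lin_rep_dpart_zapps]]) auto

lemma lin_rep_dpart_commutator:
  assumes K: "set K \<subseteq> Zfields" and Z: "Z \<in> Zfields" and g: "g \<le> 2"
  shows "lin_rep (Suc (length K)) (Suc (boost_count K))
    (\<lambda>u q. zapp Z (dpart g (zapps K u)) q - dpart g (zapp Z (zapps K u)) q)"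
proof (rule ZfieldsE[OF Z])
  have w: "smooth_on V (zapps K u)" if "regular V u" for V u
    using regular_smooth[OF regular_zapps[OF that K]] .
  fix a assume Za: "Z = Dz a" "a \<le> 2"
  show ?thesis
    by (rule lin_rep_cong[OF lin_rep_zero])
      (simp add: Za dpart_dpart_commute[OF regular_open w g Za(2)])
next
  have w: "smooth_on V (zapps K u)" if "regular V u" for V u
    using regular_smooth[OF regular_zapps[OF that K]] .
  fix b assume Zb: "Z = Lz b" "b \<in> {1,2}"
  then have b2: "b \<le> 2" by auto
  have "lin_rep (Suc (length K)) (Suc (boost_count K)) (\<lambda>u q. - ((if g = b then dpart 0 (zapps K u) q else 0)
      + (if g = 0 then dpart b (zapps K u) q else 0)))"
    using K b2 by (intro lin_rep_neg lin_rep_add lin_rep_if lin_rep_dpart_zapps_Suc) auto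
  then show ?thesis
    by (rule lin_rep_cong) (simp add: Zb dpart_boost_commute[OF regular_open w _ g b2])
qed

lemma lin_rep_boost_dpart_commutator:
  assumes K: "set K \<subseteq> Zfields" and Z: "Z \<in> Zfields" and c: "c \<in> {1,2}" and g: "g \<le> 2"
  shows "lin_rep (Suc (length K)) (Suc (boost_count K))
    (\<lambda>u q. zapp Z (boost c (dpart g (zapps K u))) q - boost c (dpart g (zapp Z (zapps K u))) q)"
    (is "lin_rep ?p ?k _")
proof -
  have w: "smooth_on V (zapps K u)" if "regular V u" for V u
    using regular_smooth[OF regular_zapps[OF that K]] .
  have DD: "lin_rep ?p ?k (\<lambda>u. dpart a (dpart d (zapps K u)))" if "a \<le> 2" "d \<le> 2" for a d
  proof -
    have "Dz a \<in> Zfields" using that(1) unfolding Zfields_def by (auto simp: numeral_2_eq_2 le_Suc_eq)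
    from lin_rep_zapp_dpart_zapps[OF K this that(2)] show ?thesis by simp
  qed
  have LD: "lin_rep ?p ?k (\<lambda>u. boost c (dpart d (zapps K u)))" if "c \<in> {1,2}" "d \<le> 2" for c d
  proof -
    have "Lz c \<in> Zfields" using that(1) unfolding Zfields_def by auto
    from lin_rep_zapp_dpart_zapps[OF K this that(2)] show ?thesis by simp
  qed
  have c2: "c \<le> 2" using c by auto
  show ?thesis
  proof (rule ZfieldsE[OF Z])
    fix a assume Za: "Z = Dz a" "a \<le> 2"
    have "lin_rep ?p ?k (\<lambda>u q. (if a = c then dpart 0 (dpart g (zapps K u)) q else 0)
        + (if a = 0 then dpart c (dpart g (zapps K u)) q else 0))"
      using c2 g by (intro lin_rep_add lin_rep_if DD) auto
    then show ?thesis
      by (rule lin_rep_cong) (simp add: Za dpart_boost_dpart_commutator[OF regular_open w _ Za(2) c2 g])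
  next
    fix b assume Zb: "Z = Lz b" "b \<in> {1,2}"
    have t: "crd 0 q \<noteq> 0" if "regular V u" "q \<in> V" for V u q
      using regular_subset_tpos[OF that(1)] that(2) unfolding tpos_def by auto
    have "lin_rep ?p ?k (\<lambda>u q. crd b q / crd 0 q * boost c (dpart g (zapps K u)) q
        - crd c q / crd 0 q * boost b (dpart g (zapps K u)) q
        - ((if g = b then boost c (dpart 0 (zapps K u)) q else 0)
          + (if g = 0 then boost c (dpart b (zapps K u)) q else 0)))"
      using Zb(2) c g by (intro lin_rep_diff lin_rep_add lin_rep_if lin_rep_scale Coef0_ratio LD) auto
    then show ?thesis
      by (rule lin_rep_cong) (simp add: Zb boost_boost_dpart_commutator[OF regular_open w _ t Zb(2) c g])
  qed
qed

lemma lin_rep_frame_op_commutator: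
  assumes K: "set K \<subseteq> Zfields" and Z: "Z \<in> Zfields" and Y: "frame_op Y" and g: "g \<le> 2"
  shows "lin_rep (Suc (length K)) (Suc (boost_count K))
    (\<lambda>u q. zapp Z (zapps Y (dpart g (zapps K u))) q - zapps Y (dpart g (zapp Z (zapps K u))) q)"
  using Y lin_rep_dpart_commutator[OF K Z g] lin_rep_boost_dpart_commutator[OF K Z _ g]
  unfolding frame_op_def by auto

section \<open>Bilinear combinations of derivatives of \<open>H\<close> and \<open>u\<close>\<close>

text \<open>A term \<open>(c, A, a, b, B, g)\<close> stands for \<open>c \<cdot> Z\<^sup>A H\<^sup>a\<^sup>b \<cdot> Z\<^sup>B \<partial>\<^sub>g u\<close>;
  \<open>adm_pair p k A B\<close> says that it is controlled by the summand \<open>(p\<^sub>1, k\<^sub>1)\<close> of the right-hand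
  side of the theorem, for some \<open>p\<^sub>1\<close> and \<open>k\<^sub>1\<close>.\<close>

type_synonym bil_term = "fn \<times> zop list \<times> nat \<times> nat \<times> zop list \<times> nat"

definition bil_eval :: "fn \<Rightarrow> (nat \<Rightarrow> nat \<Rightarrow> fn) \<Rightarrow> bil_term list \<Rightarrow> fn" where
  "bil_eval u H ts q = (\<Sum>(c,A,a,b,B,g)\<leftarrow>ts. c q * zapps A (H a b) q * zapps B (dpart g u) q)"

definition adm_pair :: "nat \<Rightarrow> nat \<Rightarrow> zop list \<Rightarrow> zop list \<Rightarrow> bool" where
  "adm_pair p k A B \<longleftrightarrow> (\<exists>p1<p. \<exists>k1\<le>k. A \<in> ZK (p - p1) (k - k1) \<and> B \<in> ZK (Suc p1) (Suc k1))"

definition bil_terms :: "nat \<Rightarrow> nat \<Rightarrow> bil_term list \<Rightarrow> bool" where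
  "bil_terms p k ts \<longleftrightarrow>
    (\<forall>(c,A,a,b,B,g)\<in>set ts. c \<in> Coef1 \<and> a \<le> 2 \<and> b \<le> 2 \<and> g \<le> 2 \<and> adm_pair p k A B)"

definition regular_pair :: "pt set \<Rightarrow> fn \<Rightarrow> (nat \<Rightarrow> nat \<Rightarrow> fn) \<Rightarrow> bool" where
  "regular_pair V u H \<longleftrightarrow> regular V u \<and> (\<forall>a\<le>2. \<forall>b\<le>2. smooth_on V (H a b))"

definition bil_rep :: "nat \<Rightarrow> nat \<Rightarrow> (fn \<Rightarrow> (nat \<Rightarrow> nat \<Rightarrow> fn) \<Rightarrow> fn) \<Rightarrow> bool" where
  "bil_rep p k D \<longleftrightarrow>
    (\<exists>ts. bil_terms p k ts \<and> (\<forall>V u H. regular_pair V u H \<longrightarrow> eq_on V (D u H) (bil_eval u H ts)))"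

lemma regular_pair_regular: "regular_pair V u H \<Longrightarrow> regular V u"
  unfolding regular_pair_def by blast

lemma regular_pair_zapps: "regular_pair V u H \<Longrightarrow> set K \<subseteq> Zfields \<Longrightarrow> regular_pair V (zapps K u) H"
  unfolding regular_pair_def using regular_zapps by blast

lemma bil_repI:
  "bil_terms p k ts \<Longrightarrow> (\<And>V u H. regular_pair V u H \<Longrightarrow> eq_on V (D u H) (bil_eval u H ts))
    \<Longrightarrow> bil_rep p k D"
  unfolding bil_rep_def by blast

lemma bil_repE:
  assumes "bil_rep p k D"
  obtains ts where "bil_terms p k ts"
    "\<And>V u H. regular_pair V u H \<Longrightarrow> eq_on V (D u H) (bil_eval u H ts)"
  using assms unfolding bil_rep_def by blast

lemma bil_rep_cong:
  assumes "bil_rep p k D" "\<And>V u H q. regular_pair V u H \<Longrightarrow> q \<in> V \<Longrightarrow> E u H q = D u H q"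
  shows "bil_rep p k E"
proof -
  have "eq_on V (E u H) (D u H)" if "regular_pair V u H" for V u H
    using assms(2)[OF that] unfolding eq_on_def by blast
  then show ?thesis using assms(1) unfolding bil_rep_def using eq_on_trans by blast
qed

lemma bil_rep_zero: "bil_rep p k (\<lambda>u H q. 0)"
  by (rule bil_repI[of p k "[]"]) (auto simp: bil_terms_def bil_eval_def eq_on_def)

lemma bil_rep_add: "bil_rep p k D \<Longrightarrow> bil_rep p k E \<Longrightarrow> bil_rep p k (\<lambda>u H q. D u H q + E u H q)"
proof -
  assume "bil_rep p k D" "bil_rep p k E"
  then obtain ts1 ts2
    where t1: "bil_terms p k ts1" "\<And>V u H. regular_pair V u H \<Longrightarrow> eq_on V (D u H) (bil_eval u H ts1)"
      and t2: "bil_terms p k ts2" "\<And>V u H. regular_pair V u H \<Longrightarrow> eq_on V (E u H) (bil_eval u H ts2)"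
    by (meson bil_repE)
  show ?thesis
  proof (rule bil_repI[of p k "ts1 @ ts2"])
    show "bil_terms p k (ts1 @ ts2)" using t1(1) t2(1) unfolding bil_terms_def by auto
    fix V u H assume "regular_pair V u H"
    then show "eq_on V (\<lambda>q. D u H q + E u H q) (bil_eval u H (ts1 @ ts2))"
      using t1(2) t2(2) unfolding eq_on_def bil_eval_def by auto
  qed
qed

lemma bil_rep_sum_list:
  "(\<And>j. j \<in> set js \<Longrightarrow> bil_rep p k (D j)) \<Longrightarrow> bil_rep p k (\<lambda>u H q. \<Sum>j\<leftarrow>js. D j u H q)"
proof (induction js)
  case Nil
  then show ?case using bil_rep_zero by simp
next
  case (Cons j js)
  then show ?case using bil_rep_add[of p k "D j" "\<lambda>u H q. \<Sum>j\<leftarrow>js. D j u H q"] by simp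
qed

lemma adm_pair_Cons_left:
  assumes "adm_pair p k A B" "Z \<in> Zfields"
  shows "adm_pair (Suc p) ((if is_Lz Z then 1 else 0) + k) (Z # A) B"
proof -
  obtain p1 k1 where h: "p1 < p" "k1 \<le> k" "A \<in> ZK (p - p1) (k - k1)" "B \<in> ZK (Suc p1) (Suc k1)"
    using assms(1) unfolding adm_pair_def by blast
  have "Z # A \<in> ZK (Suc p - p1) ((if is_Lz Z then 1 else 0) + k - k1)"
    using h(1-3) assms(2) unfolding ZK_iff by auto
  then show ?thesis using h unfolding adm_pair_def by (intro exI[of _ p1] conjI exI[of _ k1]) auto
qed

lemma adm_pair_Cons_right:
  assumes "adm_pair p k A B" "Z \<in> Zfields"
  shows "adm_pair (Suc p) ((if is_Lz Z then 1 else 0) + k) A (Z # B)"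
proof -
  obtain p1 k1 where h: "p1 < p" "k1 \<le> k" "A \<in> ZK (p - p1) (k - k1)" "B \<in> ZK (Suc p1) (Suc k1)"
    using assms(1) unfolding adm_pair_def by blast
  have "Z # B \<in> ZK (Suc (Suc p1)) (Suc ((if is_Lz Z then 1 else 0) + k1))"
    using h(4) assms(2) unfolding ZK_iff by auto
  moreover have "A \<in> ZK (Suc p - Suc p1) ((if is_Lz Z then 1 else 0) + k - ((if is_Lz Z then 1 else 0) + k1))"
    using h(3) by simp
  ultimately show ?thesis
    using h unfolding adm_pair_def by (intro exI[of _ "Suc p1"] conjI exI[of _ "(if is_Lz Z then 1 else 0) + k1"]) auto
qed

lemma adm_pair_mono:
  assumes "adm_pair p k A B"
  shows "adm_pair (Suc p) (j + k) A B"
proof -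
  obtain p1 k1 where h: "p1 < p" "k1 \<le> k" "A \<in> ZK (p - p1) (k - k1)" "B \<in> ZK (Suc p1) (Suc k1)"
    using assms(1) unfolding adm_pair_def by blast
  have "A \<in> ZK (Suc p - p1) (j + k - k1)"
    using h(1-3) unfolding ZK_iff by auto
  then show ?thesis using h unfolding adm_pair_def by (intro exI[of _ p1] conjI exI[of _ k1]) auto
qed

lemma adm_pair_Nil_left: "B \<in> ZK (Suc p) (Suc k) \<Longrightarrow> adm_pair (Suc p) k [] B"
  unfolding adm_pair_def ZK_iff by (intro exI[of _ p] conjI exI[of _ k]) auto

lemma adm_pair_single_left:
  assumes "Z \<in> Zfields" "B \<in> ZK (Suc p) (Suc k)"
  shows "adm_pair (Suc p) ((if is_Lz Z then 1 else 0) + k) [Z] B"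
proof -
  have "[Z] \<in> ZK (Suc p - p) ((if is_Lz Z then 1 else 0) + k - k)"
    using assms(1) unfolding ZK_iff by auto
  then show ?thesis using assms(2) unfolding adm_pair_def by (intro exI[of _ p] conjI exI[of _ k]) auto
qed

lemma bil_term_differentiable:
  assumes u: "regular_pair V u H" and c: "c \<in> Coef1" and a: "a \<le> 2" and b: "b \<le> 2" and g: "g \<le> 2"
    and A: "set A \<subseteq> Zfields" and B: "set B \<subseteq> Zfields" and q: "q \<in> V"
  shows "c differentiable (at q)" "zapps A (H a b) differentiable (at q)"
    "zapps B (dpart g u) differentiable (at q)"
proof -
  have V: "open V" and sub: "V \<subseteq> tpos" and smu: "smooth_on V u" and smH: "smooth_on V (H a b)"
    using u a b unfolding regular_pair_def regular_def by auto
  show "c differentiable (at q)"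
    using Coef0_differentiable c Coef1_subset_Coef0 sub q by blast
  show "zapps A (H a b) differentiable (at q)"
    using smooth_on_imp_differentiable_at[OF V smooth_on_zapps[OF V smH A] q] .
  show "zapps B (dpart g u) differentiable (at q)"
    using smooth_on_imp_differentiable_at[OF V smooth_on_zapps[OF V smooth_on_dpart[OF smu g] B] q] .
qed

definition zapp_bil_terms :: "zop \<Rightarrow> bil_term list \<Rightarrow> bil_term list" where
  "zapp_bil_terms Z ts = concat (map (\<lambda>(c,A,a,b,B,g).
     [(zapp Z c, A, a, b, B, g), (c, Z # A, a, b, B, g), (c, A, a, b, Z # B, g)]) ts)"

lemma bil_terms_imp:
  "bil_terms p k ts \<Longrightarrow> (c,A,a,b,B,g) \<in> set ts \<Longrightarrow>
    c \<in> Coef1 \<and> a \<le> 2 \<and> b \<le> 2 \<and> g \<le> 2 \<and> adm_pair p k A B \<and> set A \<subseteq> Zfields \<and> set B \<subseteq> Zfields"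
  unfolding bil_terms_def adm_pair_def ZK_iff by fastforce

lemma bil_terms_zapp:
  assumes ts: "bil_terms p k ts" and Z: "Z \<in> Zfields"
  shows "bil_terms (Suc p) ((if is_Lz Z then 1 else 0) + k) (zapp_bil_terms Z ts)"
  unfolding bil_terms_def
proof
  fix x assume "x \<in> set (zapp_bil_terms Z ts)"
  then obtain c A a b B g where y: "(c,A,a,b,B,g) \<in> set ts"
    and x: "x = (zapp Z c, A, a, b, B, g) \<or> x = (c, Z # A, a, b, B, g) \<or> x = (c, A, a, b, Z # B, g)"
    unfolding zapp_bil_terms_def by auto
  have h: "c \<in> Coef1" "a \<le> 2" "b \<le> 2" "g \<le> 2" "adm_pair p k A B"
    using bil_terms_imp[OF ts y] by auto
  show "case x of (c,A,a,b,B,g) \<Rightarrow>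
      c \<in> Coef1 \<and> a \<le> 2 \<and> b \<le> 2 \<and> g \<le> 2 \<and> adm_pair (Suc p) ((if is_Lz Z then 1 else 0) + k) A B"
    using x h zapp_Coef1[OF h(1) Z] adm_pair_Cons_left[OF h(5) Z] adm_pair_Cons_right[OF h(5) Z]
      adm_pair_mono[OF h(5), of "if is_Lz Z then 1 else 0"] by auto
qed

lemma zapp_bil_eval:
  assumes u: "regular_pair V u H" and ts: "bil_terms p k ts" and q: "q \<in> V"
  shows "zapp Z (bil_eval u H ts) q = bil_eval u H (zapp_bil_terms Z ts) q"
proof -
  let ?T = "\<lambda>(c,A,a,b,B,g) q. c q * zapps A (H a b) q * zapps B (dpart g u) q"
  have parts: "c differentiable (at q)" "zapps A (H a b) differentiable (at q)"
    "zapps B (dpart g u) differentiable (at q)" if "(c,A,a,b,B,g) \<in> set ts" for c A a b B g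
    using bil_term_differentiable[OF u _ _ _ _ _ _ q] bil_terms_imp[OF ts that] by auto
  have "zapp Z (bil_eval u H ts) q = zapp Z (\<lambda>q. \<Sum>x\<leftarrow>ts. ?T x q) q"
    unfolding bil_eval_def by (simp add: case_prod_beta')
  also have "\<dots> = (\<Sum>x\<leftarrow>ts. zapp Z (?T x) q)"
    using parts by (intro zapp_sum_list) (auto simp: case_prod_beta')
  also have "\<dots> = (\<Sum>x\<leftarrow>ts. \<Sum>(c,A,a,b,B,g)\<leftarrow>(\<lambda>(c,A,a,b,B,g).
      [(zapp Z c, A, a, b, B, g), (c, Z # A, a, b, B, g), (c, A, a, b, Z # B, g)]) x.
      c q * zapps A (H a b) q * zapps B (dpart g u) q)"
    using parts by (intro arg_cong[where f=sum_list] map_cong refl) (auto simp: zapp_mult3)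
  also have "\<dots> = bil_eval u H (zapp_bil_terms Z ts) q"
    unfolding bil_eval_def zapp_bil_terms_def sum_list_concat_map ..
  finally show ?thesis .
qed

lemma bil_rep_zapp:
  assumes D: "bil_rep p k D" and Z: "Z \<in> Zfields"
  shows "bil_rep (Suc p) ((if is_Lz Z then 1 else 0) + k) (\<lambda>u H. zapp Z (D u H))"
proof -
  obtain ts where ts: "bil_terms p k ts"
    "\<And>V u H. regular_pair V u H \<Longrightarrow> eq_on V (D u H) (bil_eval u H ts)"
    using D by (meson bil_repE)
  show ?thesis
  proof (rule bil_repI[OF bil_terms_zapp[OF ts(1) Z]])
    fix V u H assume u: "regular_pair V u H"
    have V: "open V" using regular_open[OF regular_pair_regular[OF u]] .
    have "zapp Z (D u H) q = zapp Z (bil_eval u H ts) q" if "q \<in> V" for q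
      by (rule zapp_cong_open[OF V that]) (use ts(2)[OF u] in \<open>simp add: eq_on_def\<close>)
    then show "eq_on V (zapp Z (D u H)) (bil_eval u H (zapp_bil_terms Z ts))"
      using zapp_bil_eval[OF u ts(1)] unfolding eq_on_def by simp
  qed
qed

lemma bil_rep_mult_lin_rep:
  assumes c: "c \<in> Coef1" and a: "a \<le> 2" and b: "b \<le> 2" and F: "lin_rep p' k' F"
    and adm: "\<And>B. B \<in> ZK p' k' \<Longrightarrow> adm_pair p k A B"
  shows "bil_rep p k (\<lambda>u H q. c q * zapps A (H a b) q * F u q)"
proof -
  obtain ts where ts: "lin_terms p' k' ts" "\<And>V u. regular V u \<Longrightarrow> eq_on V (F u) (lin_eval u ts)"
    using F by (meson lin_repE)
  define ts' where "ts' = map (\<lambda>(e,B,g). (\<lambda>q. c q * e q, A, a, b, B, g)) ts"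
  show ?thesis
  proof (rule bil_repI[of _ _ ts'])
    show "bil_terms p k ts'"
      using ts(1) c a b adm unfolding bil_terms_def lin_terms_def ts'_def by (auto intro: Coef1_mult)
    fix V u H assume "regular_pair V u H"
    moreover have "c q * zapps A (H a b) q * lin_eval u ts q = bil_eval u H ts' q" for q
      unfolding lin_eval_def bil_eval_def ts'_def by (induction ts) (auto simp: algebra_simps)
    ultimately show "eq_on V (\<lambda>q. c q * zapps A (H a b) q * F u q) (bil_eval u H ts')"
      using ts(2) regular_pair_regular unfolding eq_on_def by metis
  qed
qed

section \<open>Normal form of \<open>Hop\<close>\<close>

text \<open>A term \<open>(c, a, b, Y, g)\<close> stands for \<open>c \<cdot> H\<^sup>a\<^sup>b \<cdot> Z\<^sup>Y \<partial>\<^sub>g w\<close>.\<close>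

type_synonym frame_term = "fn \<times> nat \<times> nat \<times> zop list \<times> nat"

definition frame_eval :: "(nat \<Rightarrow> nat \<Rightarrow> fn) \<Rightarrow> fn \<Rightarrow> frame_term list \<Rightarrow> fn" where
  "frame_eval H w hs q = (\<Sum>(c,a,b,Y,g)\<leftarrow>hs. c q * H a b q * zapps Y (dpart g w) q)"

definition frame_terms :: "frame_term list \<Rightarrow> bool" where
  "frame_terms hs \<longleftrightarrow> (\<forall>(c,a,b,Y,g)\<in>set hs. c \<in> Coef1 \<and> a \<le> 2 \<and> b \<le> 2 \<and> g \<le> 2 \<and> frame_op Y)"

definition frame_rep :: "((nat \<Rightarrow> nat \<Rightarrow> fn) \<Rightarrow> fn \<Rightarrow> fn) \<Rightarrow> bool" where
  "frame_rep F \<longleftrightarrow>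
    (\<exists>hs. frame_terms hs \<and> (\<forall>V w H. regular V w \<longrightarrow> eq_on V (F H w) (frame_eval H w hs)))"

lemma frame_rep_zero: "frame_rep (\<lambda>H w q. 0)"
  unfolding frame_rep_def
  by (rule exI[of _ "[]"]) (auto simp: frame_terms_def frame_eval_def eq_on_def)

lemma frame_rep_add: "frame_rep F \<Longrightarrow> frame_rep G \<Longrightarrow> frame_rep (\<lambda>H w q. F H w q + G H w q)"
proof -
  assume "frame_rep F" "frame_rep G"
  then obtain hs1 hs2
    where h1: "frame_terms hs1" "\<And>V w H. regular V w \<Longrightarrow> eq_on V (F H w) (frame_eval H w hs1)"
      and h2: "frame_terms hs2" "\<And>V w H. regular V w \<Longrightarrow> eq_on V (G H w) (frame_eval H w hs2)"
    unfolding frame_rep_def by blast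
  have "frame_terms (hs1 @ hs2)" using h1(1) h2(1) unfolding frame_terms_def by auto
  moreover have "eq_on V (\<lambda>q. F H w q + G H w q) (frame_eval H w (hs1 @ hs2))" if "regular V w" for V w H
    using h1(2)[OF that] h2(2)[OF that] unfolding eq_on_def frame_eval_def by auto
  ultimately show ?thesis unfolding frame_rep_def by blast
qed

lemma frame_rep_sum3:
  "(\<And>x. x \<in> {0,1,2} \<Longrightarrow> frame_rep (F x)) \<Longrightarrow> frame_rep (\<lambda>H w q. \<Sum>x\<in>{0::nat,1,2}. F x H w q)"
  using frame_rep_add[of "F 0" "\<lambda>H w q. F 1 H w q + F 2 H w q"] frame_rep_add[of "F 1" "F 2"] by simp

lemma frame_rep_cong:
  assumes "frame_rep F" "\<And>V w H q. regular V w \<Longrightarrow> q \<in> V \<Longrightarrow> G H w q = F H w q"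
  shows "frame_rep G"
proof -
  have "eq_on V (G H w) (F H w)" if "regular V w" for V w H
    using assms(2)[OF that] unfolding eq_on_def by blast
  then show ?thesis using assms(1) unfolding frame_rep_def using eq_on_trans by blast
qed

lemma frame_rep_H_mult:
  assumes a: "a \<le> 2" and b: "b \<le> 2"
    and ws: "\<And>e Y g. (e,Y,g) \<in> set ws \<Longrightarrow> (\<lambda>q. k q * e q) \<in> Coef1 \<and> frame_op Y \<and> g \<le> 2"
    and U: "\<And>V w. regular V w \<Longrightarrow> eq_on V (U w) (lin_eval w ws)"
  shows "frame_rep (\<lambda>H w q. H a b q * k q * U w q)"
proof -
  define hs :: "frame_term list" where "hs = map (\<lambda>(e,Y,g). (\<lambda>q. k q * e q, a, b, Y, g)) ws"
  have "frame_terms hs"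
    unfolding frame_terms_def hs_def using ws a b by auto
  moreover have "eq_on V (\<lambda>q. H a b q * k q * U w q) (frame_eval H w hs)" if "regular V w" for V w H
  proof -
    have "H a b q * k q * lin_eval w ws q = frame_eval H w hs q" for q
      unfolding lin_eval_def frame_eval_def hs_def by (induction ws) (auto simp: algebra_simps)
    then show ?thesis using U[OF that] unfolding eq_on_def by auto
  qed
  ultimately show ?thesis unfolding frame_rep_def by blast
qed

definition ubpart_terms :: "nat \<Rightarrow> lin_term list" where
  "ubpart_terms b = (if b = 0 then [(\<lambda>q. 1, [], 0)]
     else [(\<lambda>q. crd b q / crd 0 q, [], 0), (\<lambda>q. 1, [], b)])"

lemma ubpart_eq_lin_eval: "ubpart b w = lin_eval w (ubpart_terms b)"
  by (rule ext) (simp add: ubpart_def lin_eval_def ubpart_terms_def)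

lemma ubpart_terms_imp:
  "b \<le> 2 \<Longrightarrow> (e,Y,g) \<in> set (ubpart_terms b) \<Longrightarrow> e \<in> Coef0 \<and> Y = [] \<and> g \<le> 2"
  unfolding ubpart_terms_def
  by (auto intro: Coef0_const Coef0_ratio simp: numeral_2_eq_2 le_Suc_eq split: if_splits)

lemma lin_terms_ubpart_terms: "b \<le> 2 \<Longrightarrow> lin_terms 0 0 (ubpart_terms b)"
  unfolding lin_terms_def ZK_iff using ubpart_terms_imp by fastforce

lemma ubpart_eq_boost: "q \<in> tpos \<Longrightarrow> a \<noteq> 0 \<Longrightarrow> ubpart a F q = tinv q * boost a F q"
  unfolding ubpart_def boost_def tinv_def tpos_def by (simp add: field_simps)

lemma ubpart_ubpart_spatial:
  assumes a: "a \<in> {1,2}" and b: "b \<le> 2"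
  obtains ws where "\<And>e Y g. (e,Y,g) \<in> set ws \<Longrightarrow> e \<in> Coef1 \<and> frame_op Y \<and> g \<le> 2"
    "\<And>V w. regular V w \<Longrightarrow> eq_on V (ubpart a (ubpart b w)) (lin_eval w ws)"
proof
  let ?ws = "scale_terms tinv (zapp_terms (Lz a) (ubpart_terms b))"
  show "e \<in> Coef1 \<and> frame_op Y \<and> g \<le> 2" if mem: "(e,Y,g) \<in> set ?ws" for e Y g
  proof -
    obtain e'' where e'': "(e'', Y, g) \<in> set (zapp_terms (Lz a) (ubpart_terms b))"
      and e: "e = (\<lambda>q. tinv q * e'' q)"
      using mem unfolding scale_terms_def by force
    then obtain e' B where e': "(e', B, g) \<in> set (ubpart_terms b)"
      and x: "e'' = e' \<and> Y = Lz a # B \<or> e'' = zapp (Lz a) e' \<and> Y = B"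
      unfolding zapp_terms_def by auto
    have "e' \<in> Coef0" "B = []" "g \<le> 2" using ubpart_terms_imp[OF b e'] by auto
    moreover have "Lz a \<in> Zfields" using a unfolding Zfields_def by auto
    then have "zapp (Lz a) e' \<in> Coef0" using zapp_Coef0 \<open>e' \<in> Coef0\<close> by blast
    ultimately show ?thesis
      using x a e Coef1_tinv_mult unfolding frame_op_def by auto
  qed
  fix V w assume w: "regular V w"
  have a0: "a \<noteq> 0" using a by auto
  show "eq_on V (ubpart a (ubpart b w)) (lin_eval w ?ws)"
    unfolding eq_on_def
  proof
    fix q assume q: "q \<in> V"
    have "ubpart a (ubpart b w) q = tinv q * zapp (Lz a) (lin_eval w (ubpart_terms b)) q"
      using ubpart_eq_boost[OF _ a0, of q "lin_eval w (ubpart_terms b)"] ubpart_eq_lin_eval[of b w]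
        q regular_subset_tpos[OF w] by auto
    also have "\<dots> = lin_eval w ?ws q"
      unfolding lin_eval_scale_terms zapp_lin_eval[OF w lin_terms_ubpart_terms[OF b] q] ..
    finally show "ubpart a (ubpart b w) q = lin_eval w ?ws q" .
  qed
qed

lemma ubpart_ubpart_time:
  assumes b: "b \<in> {1,2}"
  obtains ws where "\<And>e Y g. (e,Y,g) \<in> set ws \<Longrightarrow> e \<in> Coef1 \<and> frame_op Y \<and> g \<le> 2"
    "\<And>V w. regular V w \<Longrightarrow> eq_on V (ubpart 0 (ubpart b w)) (lin_eval w ws)"
proof
  let ?ws = "[(\<lambda>q. tinv q * (-1 * (crd b q / crd 0 q)), [], 0), (tinv, [Lz b], 0)] :: lin_term list"
  have "(\<lambda>q. tinv q * (-1 * (crd b q / crd 0 q))) \<in> Coef1"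
    using b by (intro Coef1_tinv_mult Coef0_mult Coef0_const Coef0_ratio)
  moreover have "tinv \<in> Coef1" using Coef1_tinv_mult[OF Coef0_const[of 1]] by simp
  ultimately show "e \<in> Coef1 \<and> frame_op Y \<and> g \<le> 2" if "(e,Y,g) \<in> set ?ws" for e Y g
    using that b unfolding frame_op_def by auto
  fix V w assume w: "regular V w"
  have V: "open V" and sm: "smooth_on V w" using regular_open[OF w] regular_smooth[OF w] .
  have b2: "b \<le> 2" and b0: "b \<noteq> 0" using b by auto
  show "eq_on V (ubpart 0 (ubpart b w)) (lin_eval w ?ws)"
    unfolding eq_on_def
  proof
    fix q assume q: "q \<in> V"
    have qt: "q \<in> tpos" using q regular_subset_tpos[OF w] by blast
    have dr: "(\<lambda>q. crd b q / crd 0 q) differentiable (at q)"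
      using Coef0_differentiable[OF Coef0_ratio[OF b] qt] .
    have d0: "dpart 0 w differentiable (at q)"
      using smooth_on_imp_differentiable_at[OF V smooth_on_dpart[OF sm] q] by simp
    have db: "dpart b w differentiable (at q)"
      using smooth_on_imp_differentiable_at[OF V smooth_on_dpart[OF sm b2] q] .
    have "ubpart 0 (ubpart b w) q = dpart 0 (\<lambda>q. crd b q / crd 0 q * dpart 0 w q + dpart b w q) q"
      unfolding ubpart_def using b0 by simp
    also have "\<dots> = dpart 0 (\<lambda>q. crd b q / crd 0 q * dpart 0 w q) q + dpart 0 (dpart b w) q"
      by (rule dpart_add[OF differentiable_mult[OF dr d0] db])
    also have "dpart 0 (\<lambda>q. crd b q / crd 0 q * dpart 0 w q) q
        = crd b q / crd 0 q * dpart 0 (dpart 0 w) q + dpart 0 (\<lambda>q. crd b q / crd 0 q) q * dpart 0 w q"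
      by (rule dpart_mult[OF dr d0])
    also have "dpart 0 (\<lambda>q. crd b q / crd 0 q) q = tinv q * (- (crd b q / crd 0 q))"
      using dpart_ratio[OF qt _ b, of 0] b0 by simp
    also have "dpart 0 (dpart b w) q = dpart b (dpart 0 w) q"
      using dpart_dpart_commute[OF V sm b2 _ q, of 0] by simp
    finally show "ubpart 0 (ubpart b w) q = lin_eval w ?ws q"
      using qt unfolding lin_eval_def tinv_def tpos_def by (simp add: field_simps boost_def)
  qed
qed

lemma ubpart_ubpart_frame:
  assumes a: "a \<le> 2" and b: "b \<le> 2" and ab: "(a, b) \<noteq> (0, 0)"
  obtains ws where "\<And>e Y g. (e,Y,g) \<in> set ws \<Longrightarrow> e \<in> Coef1 \<and> frame_op Y \<and> g \<le> 2"
    "\<And>V w. regular V w \<Longrightarrow> eq_on V (ubpart a (ubpart b w)) (lin_eval w ws)"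
proof (cases "a = 0")
  case True
  then have "b \<in> {1,2}" using ab b by auto
  then show ?thesis using that ubpart_ubpart_time True by blast
next
  case False
  then have "a \<in> {1,2}" using a by auto
  then show ?thesis using that ubpart_ubpart_spatial[OF _ b] by blast
qed

lemma Psi_Coef0: "a \<le> 2 \<Longrightarrow> b \<le> 2 \<Longrightarrow> Psi a b \<in> Coef0"
proof (cases "a \<noteq> 0 \<and> b = 0")
  case True
  assume "a \<le> 2"
  with True have "a \<in> {1,2}" by auto
  moreover have "Psi a b = (\<lambda>q. -1 * (crd a q / crd 0 q))"
    using True by (auto simp: Psi_def fun_eq_iff)
  ultimately show ?thesis by (simp only:) (intro Coef0_mult Coef0_const Coef0_ratio)
next
  case False
  then have "Psi a b = (\<lambda>q. if a = 0 then (if b = 0 then 1 else 0) else (if a = b then 1 else 0))"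
    by (auto simp: Psi_def fun_eq_iff)
  then show ?thesis using Coef0_const by simp
qed

lemma frame_rep_Hop_second_order:
  assumes a: "a \<le> 2" and b: "b \<le> 2"
  shows "frame_rep (\<lambda>H w q. if (a, b) = (0, 0) then 0 else Hbar H a b q * ubpart a (ubpart b w) q)"
proof (cases "(a, b) = (0, 0)")
  case True
  then show ?thesis using frame_rep_zero by simp
next
  case False
  obtain ws where ws: "\<And>e Y g. (e,Y,g) \<in> set ws \<Longrightarrow> e \<in> Coef1 \<and> frame_op Y \<and> g \<le> 2"
    and U: "\<And>V w. regular V w \<Longrightarrow> eq_on V (ubpart a (ubpart b w)) (lin_eval w ws)"
    using ubpart_ubpart_frame[OF a b False] by blast
  have "frame_rep (\<lambda>H w q. H a' b' q * (Psi a' a q * Psi b' b q) * ubpart a (ubpart b w) q)"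
    if "a' \<in> {0,1,2}" "b' \<in> {0,1,2}" for a' b'
  proof (rule frame_rep_H_mult[OF _ _ _ U])
    have k: "(\<lambda>q. Psi a' a q * Psi b' b q) \<in> Coef0"
      using that a b by (intro Coef0_mult Psi_Coef0) auto
    show "(\<lambda>q. Psi a' a q * Psi b' b q * e q) \<in> Coef1 \<and> frame_op Y \<and> g \<le> 2"
      if "(e, Y, g) \<in> set ws" for e Y g
      using ws[OF that] Coef1_mult[OF _ k, of e] by (simp add: mult_ac)
  qed (use that in auto)
  then have "frame_rep (\<lambda>H w q. \<Sum>a'\<in>{0::nat,1,2}. \<Sum>b'\<in>{0::nat,1,2}.
      H a' b' q * (Psi a' a q * Psi b' b q) * ubpart a (ubpart b w) q)"
    by (intro frame_rep_sum3)
  then show ?thesis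
    by (rule frame_rep_cong) (simp only: False if_False Hbar_def sum_distrib_right mult.assoc)
qed

lemma frame_rep_Hop_first_order:
  assumes a: "a \<le> 2" and b: "b \<le> 2" and b': "b' \<le> 2"
  shows "frame_rep (\<lambda>H w q. H a b q * dpart a (Psi b b') q * ubpart b' w q)"
proof (rule frame_rep_H_mult[OF a b])
  have c: "dpart a (Psi b b') \<in> Coef1" using dpart_Coef0[OF Psi_Coef0[OF b b'] a] .
  show "(\<lambda>q. dpart a (Psi b b') q * e q) \<in> Coef1 \<and> frame_op Y \<and> g \<le> 2"
    if "(e, Y, g) \<in> set (ubpart_terms b')" for e Y g
    using ubpart_terms_imp[OF b' that] Coef1_mult[OF c] unfolding frame_op_def by auto
  show "eq_on V (ubpart b' w) (lin_eval w (ubpart_terms b'))" for V w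
    by (simp add: ubpart_eq_lin_eval)
qed

lemma frame_rep_Hop: "frame_rep Hop"
proof -
  have "frame_rep (\<lambda>H w q.
      (\<Sum>a\<in>{0::nat,1,2}. \<Sum>b\<in>{0::nat,1,2}.
        if (a, b) = (0, 0) then 0 else Hbar H a b q * ubpart a (ubpart b w) q)
    + (\<Sum>a\<in>{0::nat,1,2}. \<Sum>b\<in>{0::nat,1,2}. \<Sum>b'\<in>{0::nat,1,2}.
        H a b q * dpart a (Psi b b') q * ubpart b' w q))"
    by (intro frame_rep_add frame_rep_sum3 frame_rep_Hop_second_order frame_rep_Hop_first_order) auto
  then show ?thesis unfolding Hop_def [abs_def] .
qed

section \<open>Commutators with \<open>Hop\<close>\<close>

lemma frame_terms_imp:
  "frame_terms hs \<Longrightarrow> (c,a,b,Y,g) \<in> set hs \<Longrightarrow> c \<in> Coef1 \<and> a \<le> 2 \<and> b \<le> 2 \<and> g \<le> 2 \<and> frame_op Y"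
  unfolding frame_terms_def by fastforce

lemma smooth_on_Hop:
  assumes w: "regular_pair V w H"
  shows "smooth_on V (Hop H w)"
proof -
  obtain hs where hs: "frame_terms hs" "\<And>V w H. regular V w \<Longrightarrow> eq_on V (Hop H w) (frame_eval H w hs)"
    using frame_rep_Hop unfolding frame_rep_def by blast
  have V: "open V" and sub: "V \<subseteq> tpos" and smw: "smooth_on V w"
    and smH: "\<And>a b. a \<le> 2 \<Longrightarrow> b \<le> 2 \<Longrightarrow> smooth_on V (H a b)"
    using w unfolding regular_pair_def regular_def by auto
  have "smooth_on V (\<lambda>q. c q * H a b q * zapps Y (dpart g w) q)" if "(c,a,b,Y,g) \<in> set hs" for c a b Y g
  proof -
    have "c \<in> Coef0" "a \<le> 2" "b \<le> 2" "g \<le> 2" "set Y \<subseteq> Zfields"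
      using frame_terms_imp[OF hs(1) that] Coef1_subset_Coef0 frame_op_Zfields by auto
    then show ?thesis
      using smooth_on_Coef0[OF _ V sub] smH smooth_on_zapps[OF V smooth_on_dpart[OF smw]]
      by (intro smooth_on_mult[OF V]) auto
  qed
  then have "smooth_on V (frame_eval H w hs)"
    unfolding frame_eval_def using smooth_on_sum_list[OF V, of hs "\<lambda>(c,a,b,Y,g) q. c q * H a b q * zapps Y (dpart g w) q"]
    by (simp add: case_prod_beta')
  then show ?thesis
    using smooth_on_eq_on[OF V _ eq_on_sym[OF hs(2)[OF regular_pair_regular[OF w]]]] by blast
qed

lemma zapp_frame_eval_commutator:
  assumes w: "regular_pair V w H" and hs: "frame_terms hs" and q: "q \<in> V"
  shows "zapp Z (frame_eval H w hs) q - frame_eval H (zapp Z w) hs q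
    = (\<Sum>(c,a,b,Y,g)\<leftarrow>hs. zapp Z c q * H a b q * zapps Y (dpart g w) q
        + c q * zapp Z (H a b) q * zapps Y (dpart g w) q
        + c q * H a b q * (zapp Z (zapps Y (dpart g w)) q - zapps Y (dpart g (zapp Z w)) q))"
proof -
  let ?T = "\<lambda>(c,a,b,Y,g) q. c q * H a b q * zapps Y (dpart g w) q"
  have parts: "c differentiable (at q)" "H a b differentiable (at q)"
    "zapps Y (dpart g w) differentiable (at q)" if "(c,a,b,Y,g) \<in> set hs" for c a b Y g
    using bil_term_differentiable[OF w _ _ _ _ _ _ q, of c a b g "[]" Y]
      frame_terms_imp[OF hs that] frame_op_Zfields by auto
  let ?T' = "\<lambda>(c,a,b,Y,g). c q * H a b q * zapps Y (dpart g (zapp Z w)) q"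
  have "zapp Z (frame_eval H w hs) q = zapp Z (\<lambda>q. \<Sum>x\<leftarrow>hs. ?T x q) q"
    unfolding frame_eval_def by (simp add: case_prod_beta')
  also have "\<dots> = (\<Sum>x\<leftarrow>hs. zapp Z (?T x) q)"
    using parts by (intro zapp_sum_list) (auto simp: case_prod_beta')
  finally have "zapp Z (frame_eval H w hs) q - frame_eval H (zapp Z w) hs q
      = (\<Sum>x\<leftarrow>hs. zapp Z (?T x) q - ?T' x)"
    unfolding sum_list_subtractf frame_eval_def by simp
  also have "\<dots> = (\<Sum>(c,a,b,Y,g)\<leftarrow>hs. zapp Z c q * H a b q * zapps Y (dpart g w) q
        + c q * zapp Z (H a b) q * zapps Y (dpart g w) q
        + c q * H a b q * (zapp Z (zapps Y (dpart g w)) q - zapps Y (dpart g (zapp Z w)) q))"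
  proof (intro arg_cong[where f=sum_list] map_cong refl)
    fix x assume x: "x \<in> set hs"
    obtain c a b Y g where xe: "x = (c,a,b,Y,g)" by (cases x)
    show "zapp Z (?T x) q - ?T' x = (case x of (c,a,b,Y,g) \<Rightarrow> zapp Z c q * H a b q * zapps Y (dpart g w) q
        + c q * zapp Z (H a b) q * zapps Y (dpart g w) q
        + c q * H a b q * (zapp Z (zapps Y (dpart g w)) q - zapps Y (dpart g (zapp Z w)) q))"
      using zapp_mult3[OF parts[OF x[unfolded xe]], of Z] unfolding xe by (simp add: algebra_simps)
  qed
  finally show ?thesis .
qed

lemma bil_rep_commutator_term:
  assumes K: "set K \<subseteq> Zfields" and Z: "Z \<in> Zfields"
    and c: "c \<in> Coef1" and a: "a \<le> 2" and b: "b \<le> 2" and g: "g \<le> 2" and Y: "frame_op Y"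
  shows "bil_rep (Suc (length K)) ((if is_Lz Z then 1 else 0) + boost_count K)
    (\<lambda>u H q. zapp Z c q * zapps [] (H a b) q * zapps Y (dpart g (zapps K u)) q
       + c q * zapps [Z] (H a b) q * zapps Y (dpart g (zapps K u)) q
       + c q * zapps [] (H a b) q
         * (zapp Z (zapps Y (dpart g (zapps K u))) q - zapps Y (dpart g (zapp Z (zapps K u))) q))"
    (is "bil_rep ?p ?k _")
proof -
  have adm: "adm_pair ?p ?k [] B" if "B \<in> ZK (Suc (length K)) (Suc (boost_count K))" for B
    using adm_pair_Nil_left ZK_mono[OF that] by simp
  have "bil_rep ?p ?k (\<lambda>u H q. zapp Z c q * zapps [] (H a b) q * zapps Y (dpart g (zapps K u)) q)"
    by (rule bil_rep_mult_lin_rep[OF zapp_Coef1[OF c Z] a b lin_rep_frame_op[OF Y g K] adm])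
  moreover have "bil_rep ?p ?k (\<lambda>u H q. c q * zapps [Z] (H a b) q * zapps Y (dpart g (zapps K u)) q)"
    by (rule bil_rep_mult_lin_rep[OF c a b lin_rep_frame_op[OF Y g K] adm_pair_single_left[OF Z]])
  moreover have "bil_rep ?p ?k (\<lambda>u H q. c q * zapps [] (H a b) q
      * (zapp Z (zapps Y (dpart g (zapps K u))) q - zapps Y (dpart g (zapp Z (zapps K u))) q))"
    by (rule bil_rep_mult_lin_rep[OF c a b lin_rep_frame_op_commutator[OF K Z Y g] adm])
  ultimately show ?thesis by (intro bil_rep_add)
qed

lemma bil_rep_commutator_step:
  assumes K: "set K \<subseteq> Zfields" and Z: "Z \<in> Zfields"
  shows "bil_rep (Suc (length K)) ((if is_Lz Z then 1 else 0) + boost_count K)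
    (\<lambda>u H q. zapp Z (Hop H (zapps K u)) q - Hop H (zapp Z (zapps K u)) q)"
proof -
  obtain hs where hs: "frame_terms hs" "\<And>V w H. regular V w \<Longrightarrow> eq_on V (Hop H w) (frame_eval H w hs)"
    using frame_rep_Hop unfolding frame_rep_def by blast
  define D :: "frame_term \<Rightarrow> fn \<Rightarrow> (nat \<Rightarrow> nat \<Rightarrow> fn) \<Rightarrow> fn" where
    "D = (\<lambda>(c,a,b,Y,g) u H q. zapp Z c q * zapps [] (H a b) q * zapps Y (dpart g (zapps K u)) q
       + c q * zapps [Z] (H a b) q * zapps Y (dpart g (zapps K u)) q
       + c q * zapps [] (H a b) q
         * (zapp Z (zapps Y (dpart g (zapps K u))) q - zapps Y (dpart g (zapp Z (zapps K u))) q))"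
  have "bil_rep (Suc (length K)) ((if is_Lz Z then 1 else 0) + boost_count K) (\<lambda>u H q. \<Sum>x\<leftarrow>hs. D x u H q)"
    using bil_rep_commutator_term[OF K Z] frame_terms_imp[OF hs(1)]
    by (intro bil_rep_sum_list) (auto simp: D_def split: prod.splits)
  then show ?thesis
  proof (rule bil_rep_cong)
    fix V u H q assume u: "regular_pair V u H" and q: "q \<in> V"
    have w: "regular_pair V (zapps K u) H" using regular_pair_zapps[OF u K] .
    have Zw: "regular V (zapp Z (zapps K u))"
      using regular_pair_regular[OF regular_pair_zapps[OF u, of "Z # K"]] K Z by simp
    have "zapp Z (Hop H (zapps K u)) q = zapp Z (frame_eval H (zapps K u) hs) q"
      by (rule zapp_cong_open[OF regular_open[OF regular_pair_regular[OF u]] q])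
        (use hs(2)[OF regular_pair_regular[OF w]] in \<open>simp add: eq_on_def\<close>)
    moreover have "Hop H (zapp Z (zapps K u)) q = frame_eval H (zapp Z (zapps K u)) hs q"
      using hs(2)[OF Zw] q unfolding eq_on_def by blast
    moreover have "zapp Z (frame_eval H (zapps K u) hs) q - frame_eval H (zapp Z (zapps K u)) hs q
        = (\<Sum>x\<leftarrow>hs. D x u H q)"
      unfolding zapp_frame_eval_commutator[OF w hs(1) q]
      by (intro arg_cong[where f=sum_list] map_cong refl) (auto simp: D_def)
    ultimately show "zapp Z (Hop H (zapps K u)) q - Hop H (zapp Z (zapps K u)) q = (\<Sum>x\<leftarrow>hs. D x u H q)"
      by simp
  qed
qed

lemma bil_rep_commutator:
  "set K \<subseteq> Zfields \<Longrightarrow>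
    bil_rep (length K) (boost_count K) (\<lambda>u H q. zapps K (Hop H u) q - Hop H (zapps K u) q)"
proof (induction K)
  case Nil
  show ?case by (rule bil_rep_cong[OF bil_rep_zero]) simp
next
  case (Cons Z K)
  have Z: "Z \<in> Zfields" and K: "set K \<subseteq> Zfields" using Cons.prems by auto
  have "bil_rep (length (Z # K)) (boost_count (Z # K))
     (\<lambda>u H q. zapp Z (\<lambda>q. zapps K (Hop H u) q - Hop H (zapps K u) q) q
        + (zapp Z (Hop H (zapps K u)) q - Hop H (zapp Z (zapps K u)) q))"
    using bil_rep_add[OF bil_rep_zapp[OF Cons.IH[OF K] Z] bil_rep_commutator_step[OF K Z]] by simp
  then show ?case
  proof (rule bil_rep_cong)
    fix V u H q assume u: "regular_pair V u H" and q: "q \<in> V"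
    have V: "open V" using regular_open[OF regular_pair_regular[OF u]] .
    have "zapps K (Hop H u) differentiable (at q)"
      using smooth_on_imp_differentiable_at[OF V smooth_on_zapps[OF V smooth_on_Hop[OF u] K] q] .
    moreover have "Hop H (zapps K u) differentiable (at q)"
      using smooth_on_imp_differentiable_at[OF V smooth_on_Hop[OF regular_pair_zapps[OF u K]] q] .
    ultimately show "zapps (Z # K) (Hop H u) q - Hop H (zapps (Z # K) u) q
      = zapp Z (\<lambda>q. zapps K (Hop H u) q - Hop H (zapps K u) q) q
        + (zapp Z (Hop H (zapps K u)) q - Hop H (zapp Z (zapps K u)) q)"
      by (simp add: zapp_diff)
  qed
qed

section \<open>The pointwise estimate\<close>

lemma finite_ZK: "finite (ZK p k)"
proof (rule finite_subset)
  show "ZK p k \<subseteq> {xs. set xs \<subseteq> Zfields \<and> length xs \<le> p}" by (auto simp: ZK_iff)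
  show "finite {xs. set xs \<subseteq> Zfields \<and> length xs \<le> p}"
    by (rule finite_lists_length_le) (simp add: Zfields_def)
qed

lemma znorm_ge: "zs \<in> ZK p k \<Longrightarrow> \<bar>zapps zs w q\<bar> \<le> znorm p k w q"
  unfolding znorm_def by (rule Max_ge) (use finite_ZK in auto)

lemma znorm_nonneg: "0 \<le> znorm p k w q"
  using znorm_ge[of "[]" p k w q] by (simp add: ZK_iff)

lemma dnorm_ge: "g \<le> 2 \<Longrightarrow> znorm p k (dpart g u) q \<le> dnorm p k u q"
  unfolding dnorm_def by (rule Max_ge) (auto simp: numeral_2_eq_2 le_Suc_eq)

lemma dnorm_nonneg: "0 \<le> dnorm p k u q"
  using dnorm_ge[of 0 p k u q] znorm_nonneg[of p k "dpart 0 u" q] by linarith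

lemma Hnorm_ge: "a \<le> 2 \<Longrightarrow> b \<le> 2 \<Longrightarrow> znorm p k (H a b) q \<le> Hnorm p k H q"
  unfolding Hnorm_def by (rule Max_ge) (auto simp: numeral_2_eq_2 le_Suc_eq)

lemma Hnorm_nonneg: "0 \<le> Hnorm p k H q"
  using Hnorm_ge[of 0 0 p k H q] znorm_nonneg[of p k "H 0 0" q] by linarith

lemma Habs_nonneg: "0 \<le> Habs H q"
proof -
  have "\<bar>H 0 0 q\<bar> \<le> Habs H q" unfolding Habs_def by (rule Max_ge) auto
  then show ?thesis by linarith
qed

definition norm_pair_sum :: "nat \<Rightarrow> nat \<Rightarrow> fn \<Rightarrow> (nat \<Rightarrow> nat \<Rightarrow> fn) \<Rightarrow> pt \<Rightarrow> real" where
  "norm_pair_sum p k u H q =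
    (\<Sum>p1<p. \<Sum>k1\<le>k. dnorm (p1 + 1) (k1 + 1) u q * Hnorm (p - p1) (k - k1) H q)"

lemma norm_pair_sum_ge:
  assumes "p1 < p" "k1 \<le> k"
  shows "dnorm (p1 + 1) (k1 + 1) u q * Hnorm (p - p1) (k - k1) H q \<le> norm_pair_sum p k u H q"
proof -
  have nonneg: "0 \<le> dnorm (i + 1) (j + 1) u q * Hnorm (p - i) (k - j) H q" for i j
    by (intro mult_nonneg_nonneg dnorm_nonneg Hnorm_nonneg)
  have "dnorm (p1 + 1) (k1 + 1) u q * Hnorm (p - p1) (k - k1) H q
     \<le> (\<Sum>k1\<le>k. dnorm (p1 + 1) (k1 + 1) u q * Hnorm (p - p1) (k - k1) H q)"
    by (rule member_le_sum) (use assms nonneg in auto)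
  also have "\<dots> \<le> norm_pair_sum p k u H q" unfolding norm_pair_sum_def
    by (rule member_le_sum[of p1 "{..<p}" "\<lambda>p1. \<Sum>k1\<le>k. dnorm (p1 + 1) (k1 + 1) u q * Hnorm (p - p1) (k - k1) H q"])
      (use assms nonneg in \<open>auto intro: sum_nonneg\<close>)
  finally show ?thesis .
qed

lemma bil_term_bound:
  assumes "adm_pair p k A B" "a \<le> 2" "b \<le> 2" "g \<le> 2"
  shows "\<bar>zapps A (H a b) q\<bar> * \<bar>zapps B (dpart g u) q\<bar> \<le> norm_pair_sum p k u H q"
proof -
  obtain p1 k1 where h: "p1 < p" "k1 \<le> k" "A \<in> ZK (p - p1) (k - k1)" "B \<in> ZK (Suc p1) (Suc k1)"
    using assms(1) unfolding adm_pair_def by blast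
  have "\<bar>zapps A (H a b) q\<bar> \<le> Hnorm (p - p1) (k - k1) H q"
    using znorm_ge[OF h(3)] Hnorm_ge[OF assms(2,3)] by (rule order_trans)
  moreover have "\<bar>zapps B (dpart g u) q\<bar> \<le> dnorm (p1 + 1) (k1 + 1) u q"
    using znorm_ge[OF h(4)] dnorm_ge[OF assms(4)] by simp (rule order_trans)
  ultimately have "\<bar>zapps A (H a b) q\<bar> * \<bar>zapps B (dpart g u) q\<bar>
      \<le> Hnorm (p - p1) (k - k1) H q * dnorm (p1 + 1) (k1 + 1) u q"
    by (intro mult_mono) (auto simp: Hnorm_nonneg)
  also have "\<dots> \<le> norm_pair_sum p k u H q"
    using norm_pair_sum_ge[OF h(1,2)] by (simp add: mult.commute)
  finally show ?thesis .
qed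

lemma bil_eval_bound:
  "bil_terms p k ts \<Longrightarrow>
    \<exists>C\<ge>0. \<forall>u H q. q \<in> future_cone \<longrightarrow> \<bar>bil_eval u H ts q\<bar> \<le> C / crd 0 q * norm_pair_sum p k u H q"
proof (induction ts)
  case Nil
  show ?case by (rule exI[of _ 0]) (simp add: bil_eval_def)
next
  case (Cons x ts)
  obtain c A a b B g where xe: "x = (c,A,a,b,B,g)" by (cases x)
  have h: "c \<in> Coef1" "a \<le> 2" "b \<le> 2" "g \<le> 2" "adm_pair p k A B"
    using Cons.prems unfolding bil_terms_def xe by auto
  obtain C where C: "C \<ge> 0" "\<forall>u H q. q \<in> future_cone \<longrightarrow> \<bar>bil_eval u H ts q\<bar> \<le> C / crd 0 q * norm_pair_sum p k u H q"
    using Cons.IH Cons.prems unfolding bil_terms_def by auto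
  obtain M where M: "M \<ge> 0" "\<forall>q\<in>future_cone. \<bar>c q\<bar> \<le> M / crd 0 q" using Coef1_bound[OF h(1)] by blast
  have "\<bar>bil_eval u H (x # ts) q\<bar> \<le> (M + C) / crd 0 q * norm_pair_sum p k u H q" if q: "q \<in> future_cone" for u H q
  proof -
    have t: "crd 0 q > 0" using q unfolding future_cone_def by auto
    have "bil_eval u H (x # ts) q = c q * (zapps A (H a b) q * zapps B (dpart g u) q) + bil_eval u H ts q"
      unfolding bil_eval_def xe by (simp add: mult.assoc)
    then have "\<bar>bil_eval u H (x # ts) q\<bar>
        \<le> \<bar>c q\<bar> * (\<bar>zapps A (H a b) q\<bar> * \<bar>zapps B (dpart g u) q\<bar>) + \<bar>bil_eval u H ts q\<bar>"
      by (metis abs_mult abs_triangle_ineq)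
    also have "\<dots> \<le> M / crd 0 q * norm_pair_sum p k u H q + C / crd 0 q * norm_pair_sum p k u H q"
    proof (rule add_mono)
      show "\<bar>c q\<bar> * (\<bar>zapps A (H a b) q\<bar> * \<bar>zapps B (dpart g u) q\<bar>) \<le> M / crd 0 q * norm_pair_sum p k u H q"
        using M q bil_term_bound[OF h(5) h(2-4), of H q u] t by (intro mult_mono) auto
      show "\<bar>bil_eval u H ts q\<bar> \<le> C / crd 0 q * norm_pair_sum p k u H q" using C(2) q by blast
    qed
    also have "\<dots> = (M + C) / crd 0 q * norm_pair_sum p k u H q"
      by (simp add: add_divide_distrib distrib_right)
    finally show ?thesis .
  qed
  then show ?case using M(1) C(1) by (intro exI[of _ "M + C"]) auto
qed

lemma commutator_estimate:
  assumes K: "set K \<subseteq> Zfields"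
  obtains C where "C \<ge> 0"
    "\<And>s0 s1 U u H q. open U \<Longrightarrow> Kset s0 s1 \<subseteq> U \<Longrightarrow> smooth_on U u \<Longrightarrow>
      (\<forall>a\<le>2. \<forall>b\<le>2. smooth_on U (H a b)) \<Longrightarrow> q \<in> Kset s0 s1 \<Longrightarrow>
      \<bar>zapps K (Hop H u) q - Hop H (zapps K u) q\<bar>
        \<le> C / crd 0 q * norm_pair_sum (length K) (boost_count K) u H q"
proof -
  obtain ts where ts: "bil_terms (length K) (boost_count K) ts"
    "\<And>V u H. regular_pair V u H \<Longrightarrow>
      eq_on V (\<lambda>q. zapps K (Hop H u) q - Hop H (zapps K u) q) (bil_eval u H ts)"
    using bil_rep_commutator[OF K] by (meson bil_repE)
  obtain C where C: "C \<ge> 0" "\<forall>u H q. q \<in> future_cone \<longrightarrow>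
      \<bar>bil_eval u H ts q\<bar> \<le> C / crd 0 q * norm_pair_sum (length K) (boost_count K) u H q"
    using bil_eval_bound[OF ts(1)] by blast
  have "\<bar>zapps K (Hop H u) q - Hop H (zapps K u) q\<bar>
      \<le> C / crd 0 q * norm_pair_sum (length K) (boost_count K) u H q"
    if U: "open U" "Kset s0 s1 \<subseteq> U" and u: "smooth_on U u"
      and H: "\<forall>a\<le>2. \<forall>b\<le>2. smooth_on U (H a b)" and q: "q \<in> Kset s0 s1" for s0 s1 U u H q
  proof -
    have "regular_pair (U \<inter> tpos) u H"
      unfolding regular_pair_def regular_def
      using U(1) open_tpos u H smooth_on_subset[of U _ "U \<inter> tpos"] by auto
    moreover have qc: "q \<in> future_cone" using q Kset_subset_future_cone by blast
    moreover have "q \<in> U \<inter> tpos" using q U(2) qc future_cone_subset_tpos by blast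
    ultimately have "zapps K (Hop H u) q - Hop H (zapps K u) q = bil_eval u H ts q"
      using ts(2) unfolding eq_on_def by blast
    then show ?thesis using C(2)[rule_format, OF qc] by simp
  qed
  then show ?thesis by (rule that[OF C(1)])
qed

theorem lemma5p8:
  fixes I J :: "nat list"
  assumes "set I \<subseteq> {0,1,2}" and "set J \<subseteq> {1,2}"
  shows "\<exists>C::real. \<forall>s0 s1 (U::pt set) (u::fn) (H::nat \<Rightarrow> nat \<Rightarrow> fn) q.
    open U \<and> Kset s0 s1 \<subseteq> U \<and> smooth_on U u
    \<and> (\<forall>a\<le>2. \<forall>b\<le>2. smooth_on U (H a b) \<and> H a b = H b a)
    \<and> q \<in> Kset s0 s1 \<longrightarrow>
    \<bar>dparts I (boosts J (Hop H u)) q - Hop H (dparts I (boosts J u)) q\<bar>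
      \<le> C / crd 0 q *
          (\<Sum>p1<length I + length J. \<Sum>k1\<le>length J.
             dnorm (p1 + 1) (k1 + 1) u q
             * Hnorm (length I + length J - p1) (length J - k1) H q)
        + C / crd 0 q * Habs H q * dnorm (length I + length J) (length J) u q"
proof -
  define K where "K = map Dz I @ map Lz J"
  have K: "set K \<subseteq> Zfields" using assms unfolding K_def Zfields_def by auto
  have p: "length I + length J = length K" and k: "length J = boost_count K"
    unfolding K_def boost_count_def by (simp_all add: comp_def)
  obtain C where C: "C \<ge> 0" and estimate: "\<And>s0 s1 U u H q. open U \<Longrightarrow> Kset s0 s1 \<subseteq> U \<Longrightarrow>
      smooth_on U u \<Longrightarrow> (\<forall>a\<le>2. \<forall>b\<le>2. smooth_on U (H a b)) \<Longrightarrow> q \<in> Kset s0 s1 \<Longrightarrow>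
      \<bar>zapps K (Hop H u) q - Hop H (zapps K u) q\<bar>
        \<le> C / crd 0 q * norm_pair_sum (length K) (boost_count K) u H q"
    using commutator_estimate[OF K] by blast
  have extra_term: "0 \<le> C / crd 0 q * Habs H q * dnorm (length K) (boost_count K) u q"
    if "q \<in> Kset s0 s1" for s0 s1 q u and H :: "nat \<Rightarrow> nat \<Rightarrow> fn"
  proof -
    have "crd 0 q > 0" using that Kset_subset_future_cone unfolding future_cone_def by fastforce
    then show ?thesis using C by (intro mult_nonneg_nonneg divide_nonneg_pos Habs_nonneg dnorm_nonneg)
  qed
  note estimate' = add_increasing2[OF extra_term estimate,
      unfolded norm_pair_sum_def p [symmetric] k [symmetric], unfolded K_def zapps_map_Dz_Lz]
  show ?thesis
    by (intro exI[of _ C] allI impI; elim conjE; rule estimate'; blast)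
qed

end
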